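(* Let $\mathcal{H}$ be a rotation-invariant irreducible complete Pick reproducing kernel Hilbert space of analytic functions on $\mathbb{D}$ with kernel $k$. Then the embedding dimension $d$ of $\mathcal{H}$ is finite if and only if $\frac{1}{k(0,0)}-\frac{1}{k(z,w)}$ is a polynomial in $z\bar w$. Moreover, in that case $d$ equals the number of non-zero coefficients of this polynomial.
   Context: $\mathbb{D}$ is the open unit disc; $\mathbb{B}_d$ is the open unit ball of $\mathbb{C}^d$ ($\mathbb{C}^\infty=\ell^2(\mathbb{N})$). An RKHS $\mathcal{H}$ on $\mathbb{D}$ is rotation-invariant if for every $h\in\mathcal{H}$ and $\xi$ with $|\xi|=1$, $h(\xi z)\in\mathcal{H}$ and $\|h(\xi\,\cdot)\|=\|h\|$. It is irreducible if its kernel never vanishes. It is complete Pick if for every $m\ge1$, points $\lambda_1,\dots,\lambda_n$ and matrices $A_1,\dots,A_n\in M_m(\mathbb{C})$, positivity of $[(1-A_jA_k^* )k(\lambda_j,\lambda_k)]_{j,k}$ implies existence of an $m\times m$ multiplier $F$ of norm $\le1$ with $F(\lambda_j)=A_j$. The embedding dimension of $\mathcal{H}$ is the smallest $d\in\mathbb{N}\cup\{\infty\}$ for which there exist a map $b:\mathbb{D}\to\mathbb{B}_d$ and a nowhere-vanishing function $\delta:\mathbb{D}\to\mathbb{C}$ with $k(z,w)=\frac{\delta(z)\overline{\delta(w)}}{1-\langle b(z),b(w)\rangle}$. *)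

theory Defs
  imports "HOL-Analysis.Analysis" "HOL-Computational_Algebra.Polynomial" "HOL-Library.Extended_Nat"
begin

text \<open>A Hilbert space of functions on the unit disc is modelled concretely: a set H of
  functions complex \<Rightarrow> complex (normalised to vanish off the disc) together with an
  inner product ip, linear in the first and conjugate-linear in the second argument.\<close>

abbreviation disc :: "complex set" where "disc \<equiv> ball 0 1"

definition hnorm :: "((complex \<Rightarrow> complex) \<Rightarrow> (complex \<Rightarrow> complex) \<Rightarrow> complex) \<Rightarrow> (complex \<Rightarrow> complex) \<Rightarrow> real" where
  "hnorm ip f = sqrt (Re (ip f f))"

definition rkhs_disc ::
  "(complex \<Rightarrow> complex) set \<Rightarrow> ((complex \<Rightarrow> complex) \<Rightarrow> (complex \<Rightarrow> complex) \<Rightarrow> complex)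
     \<Rightarrow> (complex \<Rightarrow> complex \<Rightarrow> complex) \<Rightarrow> bool" where
  "rkhs_disc H ip k \<longleftrightarrow>
     \<comment> \<open>analytic functions on the disc (extended by 0 outside)\<close>
     (\<forall>f\<in>H. f holomorphic_on disc \<and> (\<forall>z. z \<notin> disc \<longrightarrow> f z = 0)) \<and>
     \<comment> \<open>complex vector space\<close>
     (\<lambda>z. 0) \<in> H \<and>
     (\<forall>f\<in>H. \<forall>g\<in>H. (\<lambda>z. f z + g z) \<in> H) \<and>
     (\<forall>f\<in>H. \<forall>c. (\<lambda>z. c * f z) \<in> H) \<and>
     \<comment> \<open>inner product\<close>
     (\<forall>f\<in>H. \<forall>g\<in>H. \<forall>h\<in>H. ip (\<lambda>z. f z + g z) h = ip f h + ip g h) \<and>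
     (\<forall>f\<in>H. \<forall>g\<in>H. \<forall>c. ip (\<lambda>z. c * f z) g = c * ip f g) \<and>
     (\<forall>f\<in>H. \<forall>g\<in>H. ip g f = cnj (ip f g)) \<and>
     (\<forall>f\<in>H. Im (ip f f) = 0 \<and> Re (ip f f) \<ge> 0) \<and>
     (\<forall>f\<in>H. ip f f = 0 \<longrightarrow> f = (\<lambda>z. 0)) \<and>
     \<comment> \<open>completeness\<close>
     (\<forall>s. (\<forall>n. s n \<in> H) \<longrightarrow>
        (\<forall>e>0. \<exists>N. \<forall>m\<ge>N. \<forall>n\<ge>N. hnorm ip (\<lambda>z. s m z - s n z) < e) \<longrightarrow>
        (\<exists>g\<in>H. (\<lambda>n. hnorm ip (\<lambda>z. s n z - g z)) \<longlonglongrightarrow> 0)) \<and>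
     \<comment> \<open>reproducing kernel\<close>
     (\<forall>w\<in>disc. (\<lambda>z. k z w) \<in> H \<and> (\<forall>f\<in>H. f w = ip f (\<lambda>z. k z w)))"

definition rotation_invariant ::
  "(complex \<Rightarrow> complex) set \<Rightarrow> ((complex \<Rightarrow> complex) \<Rightarrow> (complex \<Rightarrow> complex) \<Rightarrow> complex) \<Rightarrow> bool" where
  "rotation_invariant H ip \<longleftrightarrow>
     (\<forall>h\<in>H. \<forall>\<xi>. cmod \<xi> = 1 \<longrightarrow>
        (\<lambda>z. h (\<xi> * z)) \<in> H \<and> hnorm ip (\<lambda>z. h (\<xi> * z)) = hnorm ip h)"

definition irreducible_kernel :: "(complex \<Rightarrow> complex \<Rightarrow> complex) \<Rightarrow> bool" where
  "irreducible_kernel k \<longleftrightarrow> (\<forall>z\<in>disc. \<forall>w\<in>disc. k z w \<noteq> 0)"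

text \<open>m x m matrices are functions nat \<Rightarrow> nat \<Rightarrow> complex, read on indices < m.\<close>

definition contractive_multiplier ::
  "(complex \<Rightarrow> complex) set \<Rightarrow> ((complex \<Rightarrow> complex) \<Rightarrow> (complex \<Rightarrow> complex) \<Rightarrow> complex)
     \<Rightarrow> nat \<Rightarrow> (complex \<Rightarrow> nat \<Rightarrow> nat \<Rightarrow> complex) \<Rightarrow> bool" where
  "contractive_multiplier H ip m F \<longleftrightarrow>
     (\<forall>f :: nat \<Rightarrow> complex \<Rightarrow> complex. (\<forall>a<m. f a \<in> H) \<longrightarrow>
        (\<forall>a<m. (\<lambda>z. \<Sum>b<m. F z a b * f b z) \<in> H) \<and>
        (\<Sum>a<m. (hnorm ip (\<lambda>z. \<Sum>b<m. F z a b * f b z))\<^sup>2) \<le> (\<Sum>a<m. (hnorm ip (f a))\<^sup>2))"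

definition complete_pick ::
  "(complex \<Rightarrow> complex) set \<Rightarrow> ((complex \<Rightarrow> complex) \<Rightarrow> (complex \<Rightarrow> complex) \<Rightarrow> complex)
     \<Rightarrow> (complex \<Rightarrow> complex \<Rightarrow> complex) \<Rightarrow> bool" where
  "complete_pick H ip k \<longleftrightarrow>
     (\<forall>m::nat. \<forall>n::nat. \<forall>lam :: nat \<Rightarrow> complex. \<forall>A :: nat \<Rightarrow> nat \<Rightarrow> nat \<Rightarrow> complex.
        m \<ge> 1 \<longrightarrow> (\<forall>j<n. lam j \<in> disc) \<longrightarrow>
        \<comment> \<open>positivity of the block matrix [(I - A_j A_l^*) k(lam_j, lam_l)]\<close>
        (\<forall>v :: nat \<Rightarrow> nat \<Rightarrow> complex.
           let q = (\<Sum>j<n. \<Sum>l<n. \<Sum>a<m. \<Sum>b<m.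
                      cnj (v j a) *
                      (((if a = b then 1 else 0) - (\<Sum>c<m. A j a c * cnj (A l b c))) * k (lam j) (lam l))
                      * v l b)
           in Im q = 0 \<and> Re q \<ge> 0) \<longrightarrow>
        (\<exists>F. contractive_multiplier H ip m F \<and>
             (\<forall>j<n. \<forall>a<m. \<forall>b<m. F (lam j) a b = A j a b)))"

text \<open>Embedding in the ball B_d, d \<in> N \<union> {\<infinity>}: points of B_d are square-summable
  sequences of norm < 1, vanishing from index d on (no restriction when d = \<infinity>).\<close>

definition embeds_in :: "(complex \<Rightarrow> complex \<Rightarrow> complex) \<Rightarrow> enat \<Rightarrow> bool" where
  "embeds_in k d \<longleftrightarrow>
     (\<exists>(b :: complex \<Rightarrow> nat \<Rightarrow> complex) (\<delta> :: complex \<Rightarrow> complex).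
        (\<forall>z\<in>disc. (\<forall>i. d \<le> enat i \<longrightarrow> b z i = 0) \<and>
                   summable (\<lambda>i. (cmod (b z i))\<^sup>2) \<and> (\<Sum>i. (cmod (b z i))\<^sup>2) < 1) \<and>
        (\<forall>z\<in>disc. \<delta> z \<noteq> 0) \<and>
        (\<forall>z\<in>disc. \<forall>w\<in>disc.
           k z w = \<delta> z * cnj (\<delta> w) / (1 - (\<Sum>i. b z i * cnj (b w i)))))"

definition embedding_dimension :: "(complex \<Rightarrow> complex \<Rightarrow> complex) \<Rightarrow> enat" where
  "embedding_dimension k = (LEAST d. embeds_in k d)"

end

theory Submission
  imports Defs "HOL-Complex_Analysis.Complex_Analysis"
begin

text \<open>Rotation invariance forces k(z, w) = g(z cnj w) for a zero-free holomorphic g on the disc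
  (analytic continuation in the rotation parameter), so 1 - k(0,0)/k(z,w) = \<phi>(z cnj w) for a power
  series \<phi>(t) = \<Sigma> a_n t^n with a_0 = 0. The complete Pick property makes \<phi>(z cnj w) a positive
  kernel: by induction on the number of points, a solution of a suitable Pick problem at
  0, \<lambda>_0, ..., \<lambda>_(n-1) extends a Gram representation of it by one point. Testing positivity at
  roots of unity gives a_n \<ge> 0, so b(z) = (sqrt(a_n) z^n)_(a_n \<noteq> 0) and the constant
  \<delta> = sqrt(k(0,0)) embed k into a ball of dimension #{n. a_n \<noteq> 0}. Conversely, an embedding
  into B_d yields an identity which, combined over d + 2 well chosen points, leaves at most d
  coefficients nonzero. Finally 1/k(0,0) - 1/k(z,w) = \<phi>(z cnj w)/k(0,0), a polynomial in z cnj w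
  exactly when finitely many a_n are nonzero, and then with the same nonzero coefficients up to
  the factor k(0,0).\<close>

section \<open>Power series and linear algebra\<close>

lemma homogeneous_system_nontrivial_solution:
  fixes V :: "'j \<Rightarrow> nat \<Rightarrow> 'a::field"
  assumes "finite J" "M < card J"
  shows "\<exists>\<alpha>. (\<exists>j\<in>J. \<alpha> j \<noteq> 0) \<and> (\<forall>i<M. (\<Sum>j\<in>J. \<alpha> j * V j i) = 0)"
  using assms
proof (induction M arbitrary: J V)
  case 0
  then have "J \<noteq> {}" by auto
  then show ?case by (intro exI[of _ "\<lambda>_. 1"]) auto
next
  case (Suc M)
  show ?case
  proof (cases "\<forall>j\<in>J. V j M = 0")
    case True
    obtain \<alpha> where \<alpha>: "\<exists>j\<in>J. \<alpha> j \<noteq> 0" "\<forall>i<M. (\<Sum>j\<in>J. \<alpha> j * V j i) = 0"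
      using Suc.IH[of J V] Suc.prems by auto
    have "\<forall>i<Suc M. (\<Sum>j\<in>J. \<alpha> j * V j i) = 0"
      using \<alpha>(2) True by (auto simp: less_Suc_eq)
    then show ?thesis using \<alpha>(1) by blast
  next
    case False
    then obtain p where p: "p \<in> J" "V p M \<noteq> 0" by auto
    define J' where "J' = J - {p}"
    have "finite J'" "M < card J'" unfolding J'_def using Suc.prems p by auto
    \<comment> \<open>Gaussian elimination of the unknown indexed by p using equation M\<close>
    define W where "W j i = V j i - (V j M / V p M) * V p i" for j i
    obtain \<beta> where \<beta>: "\<exists>j\<in>J'. \<beta> j \<noteq> 0" "\<forall>i<M. (\<Sum>j\<in>J'. \<beta> j * W j i) = 0"
      using Suc.IH[OF \<open>finite J'\<close> \<open>M < card J'\<close>, of W] by auto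
    have \<beta>W: "(\<Sum>j\<in>J'. \<beta> j * W j i) = 0" if "i < Suc M" for i
      using \<beta>(2) that p(2) by (cases "i < M") (auto simp: W_def less_Suc_eq)
    define \<alpha> where "\<alpha> j = (if j = p then - (\<Sum>l\<in>J'. \<beta> l * V l M) / V p M else \<beta> j)" for j
    have "(\<Sum>j\<in>J. \<alpha> j * V j i) = 0" if i: "i < Suc M" for i
    proof -
      have "(\<Sum>j\<in>J. \<alpha> j * V j i) = \<alpha> p * V p i + (\<Sum>j\<in>J'. \<beta> j * V j i)"
        unfolding J'_def \<alpha>_def using Suc.prems p by (simp add: sum.remove)
      also have "(\<Sum>j\<in>J'. \<beta> j * V j i) = (\<Sum>j\<in>J'. \<beta> j * W j i) + (\<Sum>l\<in>J'. \<beta> l * V l M) / V p M * V p i"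
        unfolding W_def by (simp add: algebra_simps sum_distrib_right sum_subtractf sum_divide_distrib)
          (simp add: sum_distrib_left mult_ac)
      finally show ?thesis using \<beta>W[OF i] unfolding \<alpha>_def by simp
    qed
    moreover have "\<exists>j\<in>J. \<alpha> j \<noteq> 0" using \<beta>(1) unfolding \<alpha>_def J'_def by auto
    ultimately show ?thesis by blast
  qed
qed

lemma power_series_vanishing_on_disc_imp_zero:
  fixes a :: "nat \<Rightarrow> complex"
  assumes "\<And>t. cmod t < 1 \<Longrightarrow> (\<lambda>n. a n * t ^ n) sums 0"
  shows "a n = 0"
proof -
  define F where "F = Abs_fps a"
  have "summable (\<lambda>n. fps_nth F n * (1/2::complex) ^ n)"
    unfolding F_def using assms[of "1/2"] by (simp add: sums_summable)
  then have "ereal (norm (1/2::complex)) \<le> fps_conv_radius F"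
    unfolding fps_conv_radius_def by (rule conv_radius_geI)
  then have "fps_conv_radius F > 0"
    by (simp add: order_less_le_trans[rotated])
  moreover have "eventually (\<lambda>z. z \<in> ball (0::complex) 1) (nhds 0)"
    by (rule eventually_nhds_ball) simp
  then have "eventually (\<lambda>z. eval_fps F z = 0) (nhds 0)"
  proof (rule eventually_mono)
    fix z :: complex assume "z \<in> ball 0 1"
    then show "eval_fps F z = 0"
      using sums_unique[OF assms[of z]] by (simp add: eval_fps_def F_def)
  qed
  ultimately have "(\<lambda>_. 0) has_fps_expansion F" unfolding has_fps_expansion_def by simp
  then have "F = 0" using has_fps_expansion_0 fps_expansion_unique_complex by blast
  then show ?thesis unfolding F_def by (metis fps_nth_Abs_fps fps_zero_nth)
qed

lemma poly_sums_coeffs: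
  fixes p :: "'a::{comm_ring_1,real_normed_vector} poly"
  shows "(\<lambda>n. coeff p n * t ^ n) sums poly p t"
proof -
  have "(\<lambda>n. coeff p n * t ^ n) sums (\<Sum>n\<le>degree p. coeff p n * t ^ n)"
    by (rule sums_finite) (auto simp: coeff_eq_0)
  then show ?thesis by (subst poly_altdef) assumption
qed

lemma monomial_sum_vanishing_at_points:
  fixes \<beta> :: "nat \<Rightarrow> 'a::idom"
  assumes "finite X" "card X = Suc D" "0 \<notin> X"
    and vanish: "\<And>x. x \<in> X \<Longrightarrow> (\<Sum>j\<in>{1..Suc D}. \<beta> j * x ^ j) = 0"
    and j: "j \<in> {1..Suc D}"
  shows "\<beta> j = 0"
proof -
  define q where "q = (\<Sum>j\<in>{1..Suc D}. monom (\<beta> j) j)"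
  have poly_q: "poly q x = (\<Sum>j\<in>{1..Suc D}. \<beta> j * x ^ j)" for x
    by (simp add: q_def poly_sum poly_monom)
  have "q = 0"
  proof (rule ccontr)
    assume "q \<noteq> 0"
    have "poly q 0 = 0" unfolding poly_q by (intro sum.neutral) auto
    then have "insert 0 X \<subseteq> {x. poly q x = 0}"
      using vanish by (auto simp: poly_q)
    then have "card (insert 0 X) \<le> card {x. poly q x = 0}"
      by (rule card_mono[OF poly_roots_finite[OF \<open>q \<noteq> 0\<close>]])
    also have "\<dots> \<le> degree q" by (rule card_poly_roots_bound[OF \<open>q \<noteq> 0\<close>])
    also have "\<dots> \<le> Suc D"
      unfolding q_def by (rule degree_sum_le) (auto intro: order_trans[OF degree_monom_le])
    finally show False using assms(1-3) by simp
  qed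
  moreover have "coeff q j = \<beta> j"
    unfolding q_def coeff_sum coeff_monom sum.delta using j by simp
  ultimately show ?thesis by simp
qed

lemma half_power_inj: "inj (\<lambda>n. (1/2::complex) ^ n)"
proof (rule injI)
  fix m n :: nat
  assume "(1/2::complex) ^ m = (1/2) ^ n"
  then have "norm ((1/2::complex) ^ m) = norm ((1/2::complex) ^ n)" by simp
  then have "(1/2::real) ^ m = (1/2) ^ n" by (simp add: norm_power norm_divide)
  then have "(2::real) ^ m = 2 ^ n" by (simp add: power_one_over)
  then show "m = n" by (simp add: power_inject_exp)
qed

lemma sum_powers_root_of_unity:
  fixes N n m :: nat
  assumes nN: "n < N"
  defines "\<omega> \<equiv> exp (2 * of_real pi * \<i> / of_nat N)"
  shows "(\<Sum>l<N. (\<omega> ^ n * cnj \<omega> ^ m) ^ l) = (if m mod N = n then of_nat N else 0)"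
proof -
  have N1: "1 \<le> N" using nN by simp
  have pw: "\<omega> ^ j = exp (2 * of_real pi * \<i> * of_nat j / of_nat N)" for j
    unfolding \<omega>_def exp_of_nat_mult[symmetric] by (simp add: field_simps)
  have "cnj \<omega> * \<omega> = 1"
    using complex_norm_square[of \<omega>] by (simp add: \<omega>_def mult.commute)
  then have cm: "cnj \<omega> ^ m * \<omega> ^ m = 1" by (metis power_mult_distrib power_one)
  define r where "r = \<omega> ^ n * cnj \<omega> ^ m"
  show ?thesis
  proof (cases "m mod N = n")
    case True
    then have "\<omega> ^ m = \<omega> ^ n" unfolding pw using complex_root_unity_eq[OF N1, of m n] nN by simp
    then have "r = 1" unfolding r_def using cm by (simp add: mult.commute)
    then show ?thesis unfolding r_def[symmetric] using True by simp
  next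
    case False
    then have ne: "\<omega> ^ m \<noteq> \<omega> ^ n" unfolding pw using complex_root_unity_eq[OF N1, of m n] nN by simp
    have "r \<noteq> 1"
    proof
      assume "r = 1"
      then have "\<omega> ^ n * (cnj \<omega> ^ m * \<omega> ^ m) = \<omega> ^ m" unfolding r_def by (metis mult.assoc mult_1)
      then show False using cm ne by simp
    qed
    moreover have "r ^ N = 1"
    proof -
      have "\<omega> ^ N = 1" using pw[of N] N1 by simp
      moreover have "r ^ N = (\<omega> ^ N) ^ n * cnj (\<omega> ^ N) ^ m"
        unfolding r_def by (simp add: power_mult_distrib flip: power_mult) (simp add: mult.commute)
      ultimately show ?thesis by simp
    qed
    ultimately have "(\<Sum>l<N. r ^ l) = 0" by (simp add: geometric_sum)
    then show ?thesis unfolding r_def[symmetric] using False by simp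
  qed
qed

lemma sum_swap3:
  "(\<Sum>j\<in>A. \<Sum>l\<in>B. \<Sum>a\<in>C. X j l a) = (\<Sum>a\<in>C. \<Sum>j\<in>A. \<Sum>l\<in>B. X j l a)"
proof -
  have "(\<Sum>j\<in>A. \<Sum>l\<in>B. \<Sum>a\<in>C. X j l a) = (\<Sum>j\<in>A. \<Sum>a\<in>C. \<Sum>l\<in>B. X j l a)"
    by (rule sum.cong[OF refl], rule sum.swap)
  also have "\<dots> = (\<Sum>a\<in>C. \<Sum>j\<in>A. \<Sum>l\<in>B. X j l a)" by (rule sum.swap)
  finally show ?thesis .
qed

lemma mult_in_disc:
  assumes "cmod \<xi> \<le> 1" "w \<in> disc"
  shows "\<xi> * w \<in> disc"
proof -
  have "cmod \<xi> * cmod w \<le> cmod w" using assms(1) by (simp add: mult_left_le_one_le)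
  then show ?thesis using assms(2) by (simp add: norm_mult)
qed

lemma mult_cnj_in_disc: "z \<in> disc \<Longrightarrow> w \<in> disc \<Longrightarrow> z * cnj w \<in> disc"
  using mult_in_disc[of "cnj w" z] by (simp add: mult.commute)

lemma power_series_dilations_vanishing:
  fixes c :: "nat \<Rightarrow> complex" and f :: "complex \<Rightarrow> complex"
  assumes sums: "\<And>t. t \<in> disc \<Longrightarrow> (\<lambda>n. c n * t ^ n) sums f t"
    and w: "\<And>j. j \<in> J \<Longrightarrow> cmod (w j) \<le> 1"
    and vanish: "\<And>z. z \<in> disc \<Longrightarrow> (\<Sum>j\<in>J. \<beta> j * f (z * w j)) = 0"
  shows "c n * (\<Sum>j\<in>J. \<beta> j * w j ^ n) = 0"
proof (rule power_series_vanishing_on_disc_imp_zero[where a = "\<lambda>n. c n * (\<Sum>j\<in>J. \<beta> j * w j ^ n)"])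
  fix t :: complex assume "cmod t < 1"
  have "t * w j \<in> disc" if "j \<in> J" for j
    using mult_in_disc[OF w[OF that], of t] \<open>cmod t < 1\<close> by (simp add: mult.commute)
  then have "(\<lambda>n. \<Sum>j\<in>J. \<beta> j * (c n * (t * w j) ^ n)) sums (\<Sum>j\<in>J. \<beta> j * f (t * w j))"
    by (intro sums_sum sums_mult sums)
  moreover have "(\<lambda>n. \<Sum>j\<in>J. \<beta> j * (c n * (t * w j) ^ n)) = (\<lambda>n. c n * (\<Sum>j\<in>J. \<beta> j * w j ^ n) * t ^ n)"
    by (simp add: sum_distrib_left sum_distrib_right power_mult_distrib mult_ac)
  ultimately show "(\<lambda>n. c n * (\<Sum>j\<in>J. \<beta> j * w j ^ n) * t ^ n) sums 0"
    using vanish \<open>cmod t < 1\<close> by simp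
qed

section \<open>Positive semidefinite forms and positive kernels\<close>

definition quad_form :: "nat \<Rightarrow> (nat \<Rightarrow> nat \<Rightarrow> complex) \<Rightarrow> (nat \<Rightarrow> complex) \<Rightarrow> complex" where
  "quad_form N B x = (\<Sum>i<N. \<Sum>j<N. cnj (x i) * B i j * x j)"

definition pos_semidef :: "nat \<Rightarrow> (nat \<Rightarrow> nat \<Rightarrow> complex) \<Rightarrow> bool" where
  "pos_semidef N B \<longleftrightarrow> (\<forall>x. Im (quad_form N B x) = 0 \<and> 0 \<le> Re (quad_form N B x))"

definition positive_kernel :: "complex set \<Rightarrow> (complex \<Rightarrow> complex \<Rightarrow> complex) \<Rightarrow> bool" where
  "positive_kernel S K \<longleftrightarrow>
     (\<forall>N (p :: nat \<Rightarrow> complex). (\<forall>i<N. p i \<in> S) \<longrightarrow> pos_semidef N (\<lambda>i j. K (p i) (p j)))"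

lemma pos_semidef_cong:
  assumes "\<And>i j. i < N \<Longrightarrow> j < N \<Longrightarrow> B i j = B' i j"
  shows "pos_semidef N B = pos_semidef N B'"
proof -
  have "quad_form N B x = quad_form N B' x" for x
    unfolding quad_form_def using assms by (intro sum.cong refl) auto
  then show ?thesis unfolding pos_semidef_def by simp
qed

lemma pos_semidef_gram:
  fixes M :: nat
  shows "pos_semidef N (\<lambda>i j. \<Sum>c<M. U i c * cnj (U j c))"
  unfolding pos_semidef_def
proof
  fix x :: "nat \<Rightarrow> complex"
  define P where "P c = (\<Sum>j<N. x j * cnj (U j c))" for c
  have "quad_form N (\<lambda>i j. \<Sum>c<M. U i c * cnj (U j c)) x
      = (\<Sum>c<M. (\<Sum>i<N. cnj (x i) * U i c) * (\<Sum>j<N. x j * cnj (U j c)))"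
    unfolding quad_form_def sum_product
    by (subst sum_swap3[symmetric]) (simp add: sum_distrib_left sum_distrib_right mult_ac)
  also have "\<dots> = (\<Sum>c<M. cnj (P c) * P c)"
    by (simp add: P_def cnj_sum mult.commute)
  also have "\<dots> = (\<Sum>c<M. of_real ((cmod (P c))\<^sup>2))"
    by (rule sum.cong[OF refl]) (metis complex_norm_square mult.commute)
  finally show "Im (quad_form N (\<lambda>i j. \<Sum>c<M. U i c * cnj (U j c)) x) = 0 \<and>
                0 \<le> Re (quad_form N (\<lambda>i j. \<Sum>c<M. U i c * cnj (U j c)) x)"
    by (simp add: Im_sum Re_sum sum_nonneg)
qed

lemma quad_form_supported:
  assumes P: "P \<subseteq> {..<N}" and Y: "\<And>i. i \<notin> P \<Longrightarrow> Y i = 0"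
  shows "quad_form N B Y = (\<Sum>i\<in>P. \<Sum>l\<in>P. cnj (Y i) * B i l * Y l)"
proof -
  have "(\<Sum>l<N. cnj (Y i) * B i l * Y l) = (\<Sum>l\<in>P. cnj (Y i) * B i l * Y l)" for i
    by (rule sum.mono_neutral_right) (use P Y in auto)
  moreover have "(\<Sum>i<N. \<Sum>l\<in>P. cnj (Y i) * B i l * Y l) = (\<Sum>i\<in>P. \<Sum>l\<in>P. cnj (Y i) * B i l * Y l)"
    by (rule sum.mono_neutral_right) (use P Y in auto)
  ultimately show ?thesis unfolding quad_form_def by simp
qed

text \<open>A constant leading block makes e_j - e_0 isotropic, hence in the kernel of the matrix.\<close>

lemma pos_semidef_constant_block_column:
  fixes B :: "nat \<Rightarrow> nat \<Rightarrow> complex" and \<alpha> :: complex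
  assumes psd: "pos_semidef (Suc N) B"
    and const: "\<And>j l. j < N \<Longrightarrow> l < N \<Longrightarrow> B j l = \<alpha>"
    and herm: "\<And>j. j < Suc N \<Longrightarrow> B N j = cnj (B j N)"
    and "0 < N" and B0: "B 0 N = \<alpha>" and j: "j < N"
  shows "B j N = \<alpha>"
proof (rule ccontr)
  assume "B j N \<noteq> \<alpha>"
  define \<delta> where "\<delta> = B j N - \<alpha>"
  have "\<delta> \<noteq> 0" unfolding \<delta>_def using \<open>B j N \<noteq> \<alpha>\<close> by simp
  have "j \<noteq> 0" using \<open>B j N \<noteq> \<alpha>\<close> B0 by (cases "j = 0") auto
  then have d: "j \<noteq> 0" "j \<noteq> N" "0 \<noteq> N" using j by auto
  define s where "s = (\<bar>Re (B N N)\<bar> + 1) / (2 * (cmod \<delta>)\<^sup>2)"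
  define t where "t = - (of_real s * \<delta>)"
  define Y where "Y i = (if i = j then t else if i = 0 then - t else if i = N then 1 else 0)" for i
  have "quad_form (Suc N) B Y = (\<Sum>i\<in>{j, 0, N}. \<Sum>l\<in>{j, 0, N}. cnj (Y i) * B i l * Y l)"
    by (rule quad_form_supported) (use j in \<open>auto simp: Y_def\<close>)
  also have "\<dots> = cnj t * \<delta> + cnj \<delta> * t + B N N"
  proof -
    have sum3: "(\<Sum>i\<in>{a, b, c}. \<Sum>l\<in>{a, b, c}. g i l) =
        g a a + g a b + g a c + g b a + g b b + g b c + g c a + g c b + g c c"
      if "a \<noteq> b" "a \<noteq> c" "b \<noteq> c" for a b c :: nat and g :: "nat \<Rightarrow> nat \<Rightarrow> complex"
      using that by (simp add: algebra_simps)
    have y: "Y j = t" "Y 0 = - t" "Y N = 1" unfolding Y_def using d by auto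
    have b: "B j j = \<alpha>" "B j 0 = \<alpha>" "B 0 j = \<alpha>" "B 0 0 = \<alpha>" "B N j = cnj (B j N)" "B N 0 = cnj \<alpha>"
      using const[of j j] const[of j 0] const[of 0 j] const[of 0 0] j \<open>0 < N\<close>
        herm[of j] herm[of 0] B0 by auto
    show ?thesis unfolding sum3[OF d] y b B0 \<delta>_def by (simp add: algebra_simps)
  qed
  finally have Y_form: "quad_form (Suc N) B Y = cnj t * \<delta> + cnj \<delta> * t + B N N" .
  have "Re (cnj t * \<delta> + cnj \<delta> * t) = - 2 * s * ((Re \<delta>)\<^sup>2 + (Im \<delta>)\<^sup>2)"
    unfolding t_def by (simp add: algebra_simps power2_eq_square)
  also have "\<dots> = - (\<bar>Re (B N N)\<bar> + 1)"
    unfolding s_def using \<open>\<delta> \<noteq> 0\<close> by (simp add: cmod_power2[symmetric])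
  moreover have "0 \<le> Re (quad_form (Suc N) B Y)" using psd unfolding pos_semidef_def by blast
  ultimately show False using abs_ge_self[of "Re (B N N)"] unfolding Y_form by simp
qed

lemma pos_semidef_corner:
  fixes B :: "nat \<Rightarrow> nat \<Rightarrow> complex" and \<alpha> :: complex
  assumes psd: "pos_semidef (Suc N) B" and "0 < N"
    and "B 0 0 = \<alpha>" "B 0 N = \<alpha>" "B N 0 = cnj \<alpha>" "Im \<alpha> = 0"
  shows "Re \<alpha> \<le> Re (B N N)"
proof -
  define Y where "Y i = (if i = N then 1 else if i = 0 then -1 else (0::complex))" for i
  have "quad_form (Suc N) B Y = (\<Sum>i\<in>{N, 0}. \<Sum>l\<in>{N, 0}. cnj (Y i) * B i l * Y l)"
    by (rule quad_form_supported) (auto simp: Y_def)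
  also have "\<dots> = B N N - cnj \<alpha>"
    using assms unfolding Y_def by simp
  finally have "quad_form (Suc N) B Y = B N N - cnj \<alpha>" .
  moreover have "0 \<le> Re (quad_form (Suc N) B Y)" using psd unfolding pos_semidef_def by blast
  ultimately show ?thesis by simp
qed

lemma gram_extend:
  fixes K :: "nat \<Rightarrow> nat \<Rightarrow> complex" and n M :: nat
  assumes gram: "\<And>i j. i < n \<Longrightarrow> j < n \<Longrightarrow> K i j = (\<Sum>c<M. U i c * cnj (U j c))"
    and col: "\<And>i. i < n \<Longrightarrow> K i n = (\<Sum>c<M. U i c * cnj (W c))"
    and herm: "\<And>i. i < n \<Longrightarrow> K n i = cnj (K i n)"
    and diag: "K n n = of_real r" and le: "(\<Sum>c<M. (cmod (W c))\<^sup>2) \<le> r"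
  shows "\<exists>(M' :: nat) U'. \<forall>i<Suc n. \<forall>j<Suc n. K i j = (\<Sum>c<M'. U' i c * cnj (U' j c))"
proof -
  define s where "s = r - (\<Sum>c<M. (cmod (W c))\<^sup>2)"
  define U' where "U' i c = (if i < n then (if c < M then U i c else 0)
                             else if c < M then W c else of_real (sqrt s))" for i c
  have extended: "K i j = (\<Sum>c<Suc M. U' i c * cnj (U' j c))" if ij: "i < Suc n" "j < Suc n" for i j
  proof -
    have split: "(\<Sum>c<Suc M. U' i c * cnj (U' j c)) =
        (\<Sum>c<M. (if i < n then U i c else W c) * cnj (if j < n then U j c else W c))
        + U' i M * cnj (U' j M)"
    proof -
      have "(\<Sum>c<M. U' i c * cnj (U' j c)) =
          (\<Sum>c<M. (if i < n then U i c else W c) * cnj (if j < n then U j c else W c))"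
        by (rule sum.cong) (auto simp: U'_def)
      then show ?thesis by (simp only: sum.lessThan_Suc)
    qed
    consider "i < n" "j < n" | "i < n" "j = n" | "i = n" "j < n" | "i = n" "j = n"
      using ij unfolding less_Suc_eq by blast
    then show ?thesis
    proof cases
      case 1
      then show ?thesis unfolding split using gram[of i j] by (simp add: U'_def)
    next
      case 2
      then show ?thesis unfolding split using col[of i] by (simp add: U'_def)
    next
      case 3
      then have "K i j = cnj (\<Sum>c<M. U j c * cnj (W c))" using herm[of j] col[of j] by simp
      then show ?thesis unfolding split using 3 by (simp add: U'_def cnj_sum mult.commute)
    next
      case 4
      have "(\<Sum>c<M. W c * cnj (W c)) + of_real (sqrt s) * cnj (of_real (sqrt s))
          = of_real ((\<Sum>c<M. (cmod (W c))\<^sup>2) + s)"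
        using le unfolding s_def of_real_add of_real_sum
        by (simp flip: complex_norm_square of_real_mult add: mult.commute)
      then show ?thesis unfolding split using 4 diag by (simp add: U'_def s_def)
    qed
  qed
  then have "\<forall>i<Suc n. \<forall>j<Suc n. K i j = (\<Sum>c<Suc M. U' i c * cnj (U' j c))" by simp
  then show ?thesis by blast
qed

lemma power_series_kernel_quad_form_roots_of_unity:
  fixes c :: "nat \<Rightarrow> complex" and f :: "complex \<Rightarrow> complex"
  assumes sums: "\<And>t. t \<in> disc \<Longrightarrow> (\<lambda>m. c m * t ^ m) sums f t" and "n < N"
  defines "\<omega> \<equiv> exp (2 * of_real pi * \<i> / of_nat N)"
  shows "(\<lambda>m. c m * of_real ((1/4) ^ m) * (if m mod N = n then of_nat N ^ 2 else 0))
           sums quad_form N (\<lambda>i j. f (\<omega> ^ i / 2 * cnj (\<omega> ^ j / 2))) (\<lambda>j. (\<omega> ^ n) ^ j)"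
proof -
  have "norm \<omega> = 1" unfolding \<omega>_def by simp
  define p where "p j = \<omega> ^ j / 2" for j
  define x where "x j = (\<omega> ^ n) ^ j" for j
  have "p i * cnj (p j) \<in> disc" for i j
    unfolding p_def using \<open>norm \<omega> = 1\<close> by (simp add: norm_mult norm_divide norm_power)
  then have "(\<lambda>m. \<Sum>i<N. \<Sum>j<N. cnj (x i) * (c m * (p i * cnj (p j)) ^ m) * x j)
      sums quad_form N (\<lambda>i j. f (p i * cnj (p j))) x"
    unfolding quad_form_def by (intro sums_sum sums_mult sums_mult2 sums)
  moreover have "(\<Sum>i<N. \<Sum>j<N. cnj (x i) * (c m * (p i * cnj (p j)) ^ m) * x j)
      = c m * of_real ((1/4) ^ m) * (if m mod N = n then of_nat N ^ 2 else 0)" for m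
  proof -
    define r where "r = \<omega> ^ n * cnj \<omega> ^ m"
    have summand: "cnj (x i) * (c m * (p i * cnj (p j)) ^ m) * x j
        = c m * of_real ((1/4) ^ m) * (cnj (r ^ i) * r ^ j)" for i j
      unfolding x_def p_def r_def
      by (simp add: power_mult_distrib power_divide mult_ac flip: power_mult)
    have "(\<Sum>i<N. \<Sum>j<N. cnj (x i) * (c m * (p i * cnj (p j)) ^ m) * x j)
        = c m * of_real ((1/4) ^ m) * ((\<Sum>i<N. cnj (r ^ i)) * (\<Sum>j<N. r ^ j))"
      unfolding summand sum_product by (simp only: sum_distrib_left)
    then show ?thesis
      unfolding r_def \<omega>_def cnj_sum[symmetric] sum_powers_root_of_unity[OF \<open>n < N\<close>]
      by (simp add: power2_eq_square)
  qed
  ultimately show ?thesis unfolding p_def x_def by simp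
qed

text \<open>In the quadratic form at the points \<omega>^j / 2 only the coefficients with index congruent to
  n modulo N survive, so positivity controls c_n up to the tail of the series beyond N.\<close>

lemma positive_kernel_power_series_coeff_bound:
  fixes c :: "nat \<Rightarrow> complex" and f :: "complex \<Rightarrow> complex"
  assumes sums: "\<And>t. t \<in> disc \<Longrightarrow> (\<lambda>m. c m * t ^ m) sums f t"
    and pos: "positive_kernel disc (\<lambda>z w. f (z * cnj w))"
    and "n < N"
  defines "g \<equiv> \<lambda>m. cmod (c m) * (1/4) ^ m"
  assumes "summable g"
  shows "\<bar>Im (c n)\<bar> * (1/4) ^ n \<le> suminf g - (\<Sum>m<N. g m)
       \<and> - (suminf g - (\<Sum>m<N. g m)) \<le> Re (c n) * (1/4) ^ n"
proof -
  define tail where "tail = suminf g - (\<Sum>m<N. g m)"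
  define \<omega> where "\<omega> = exp (2 * of_real pi * \<i> / of_nat N)"
  define Q where "Q = quad_form N (\<lambda>i j. f (\<omega> ^ i / 2 * cnj (\<omega> ^ j / 2))) (\<lambda>j. (\<omega> ^ n) ^ j)"
  have "\<omega> ^ j / 2 \<in> disc" for j unfolding \<omega>_def by (simp add: norm_divide norm_power)
  then have Q_pos: "Im Q = 0 \<and> 0 \<le> Re Q"
    using pos[unfolded positive_kernel_def, rule_format, of N "\<lambda>j. \<omega> ^ j / 2"]
    unfolding Q_def pos_semidef_def by blast
  define e where "e m = c m * of_real ((1/4) ^ m) * (if m mod N = n then of_nat N ^ 2 else 0)" for m
  have "e sums Q"
    unfolding e_def Q_def \<omega>_def by (rule power_series_kernel_quad_form_roots_of_unity[OF sums \<open>n < N\<close>])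
  then have "(\<lambda>m. e m - (if m = n then e m else 0)) sums (Q - e n)"
    by (intro sums_diff sums_single)
  moreover have "(\<lambda>m. of_nat N ^ 2 * (if N \<le> m then g m else 0)) sums (of_nat N ^ 2 * tail)"
  proof -
    have "(\<lambda>m. g m - (if m \<in> {..<N} then g m else 0)) sums tail"
      unfolding tail_def
      by (intro sums_diff summable_sums \<open>summable g\<close> sums_If_finite_set) simp
    moreover have "(\<lambda>m. g m - (if m \<in> {..<N} then g m else 0)) = (\<lambda>m. if N \<le> m then g m else 0)"
      by auto
    ultimately show ?thesis by (intro sums_mult) simp
  qed
  moreover have "norm (e m - (if m = n then e m else 0)) \<le> of_nat N ^ 2 * (if N \<le> m then g m else 0)"
    for m
  proof (cases "m mod N = n \<and> m \<noteq> n")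
    case True
    then have "N \<le> m" using \<open>n < N\<close> by (metis mod_less not_le)
    then show ?thesis using True unfolding e_def g_def by (simp add: norm_mult norm_power)
  qed (auto simp: e_def g_def)
  ultimately have tail: "norm (Q - e n) \<le> of_nat N ^ 2 * tail"
    by (rule norm_sums_le)
  have en: "Im (e n) = Im (c n) * (1/4) ^ n * of_nat N ^ 2" "Re (e n) = Re (c n) * (1/4) ^ n * of_nat N ^ 2"
    unfolding e_def using \<open>n < N\<close> by simp_all
  have "\<bar>Im (Q - e n)\<bar> \<le> of_nat N ^ 2 * tail" "\<bar>Re (Q - e n)\<bar> \<le> of_nat N ^ 2 * tail"
    using tail abs_Im_le_cmod abs_Re_le_cmod order_trans by blast+
  then have Im_bound: "of_nat N ^ 2 * (\<bar>Im (c n)\<bar> * (1/4) ^ n) \<le> of_nat N ^ 2 * tail"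
      and Re_bound: "of_nat N ^ 2 * (- tail) \<le> of_nat N ^ 2 * (Re (c n) * (1/4) ^ n)"
    using Q_pos en by (auto simp: abs_mult mult_ac)
  have "(0::real) < of_nat N ^ 2" using \<open>n < N\<close> by simp
  from mult_le_cancel_left_pos[OF this, THEN iffD1, OF Im_bound]
    mult_le_cancel_left_pos[OF this, THEN iffD1, OF Re_bound]
  show ?thesis unfolding tail_def[symmetric] ..
qed

lemma positive_kernel_power_series_coeff_nonneg:
  fixes c :: "nat \<Rightarrow> complex" and f :: "complex \<Rightarrow> complex"
  assumes sums: "\<And>t. t \<in> disc \<Longrightarrow> (\<lambda>m. c m * t ^ m) sums f t"
    and pos: "positive_kernel disc (\<lambda>z w. f (z * cnj w))"
  shows "Im (c n) = 0 \<and> 0 \<le> Re (c n)"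
proof -
  define g where "g = (\<lambda>m. cmod (c m) * (1/4) ^ m)"
  have "summable g"
  proof -
    have "Bseq (\<lambda>m. c m * (1/2::complex) ^ m)"
      using sums[of "1/2"] by (intro summable_imp_Bseq sums_summable) simp_all
    then obtain B where "\<And>m. norm (c m * (1/2::complex) ^ m) \<le> B" by (auto simp: Bseq_def)
    then have "norm (c m) * (1/2) ^ m \<le> B" for m by (simp add: norm_mult norm_power)
    then show ?thesis using Abel_lemma[of "1/4" "1/2" c B] by (simp add: g_def)
  qed
  define tail where "tail N = suminf g - (\<Sum>m<N. g m)" for N
  have "tail \<longlonglongrightarrow> suminf g - suminf g"
    unfolding tail_def by (intro tendsto_diff tendsto_const summable_LIMSEQ \<open>summable g\<close>)
  then have "tail \<longlonglongrightarrow> 0" by simp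
  have bound: "\<bar>Im (c n)\<bar> * (1/4) ^ n \<le> tail N \<and> - tail N \<le> Re (c n) * (1/4) ^ n"
    if "N \<ge> Suc n" for N
    using positive_kernel_power_series_coeff_bound[OF sums pos, of n N] that \<open>summable g\<close>
    unfolding tail_def g_def by simp
  have q: "(0::real) < (1/4) ^ n" by simp
  have "\<bar>Im (c n)\<bar> * (1/4) ^ n \<le> 0"
    by (rule LIMSEQ_le_const[OF \<open>tail \<longlonglongrightarrow> 0\<close>]) (use bound in blast)
  then have "Im (c n) = 0" using q by (simp add: mult_le_0_iff)
  have "(\<lambda>N. - tail N) \<longlonglongrightarrow> - 0" by (intro tendsto_minus \<open>tail \<longlonglongrightarrow> 0\<close>)
  then have "- 0 \<le> Re (c n) * (1/4) ^ n"
    by (rule LIMSEQ_le_const2) (use bound in blast)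
  then have "0 \<le> Re (c n)" using q by (simp add: zero_le_mult_iff)
  with \<open>Im (c n) = 0\<close> show ?thesis ..
qed

section \<open>Reproducing kernel Hilbert spaces on the disc and their multipliers\<close>

locale disc_rkhs =
  fixes H :: "(complex \<Rightarrow> complex) set"
    and ip :: "(complex \<Rightarrow> complex) \<Rightarrow> (complex \<Rightarrow> complex) \<Rightarrow> complex"
    and k :: "complex \<Rightarrow> complex \<Rightarrow> complex"
  assumes rkhs: "rkhs_disc H ip k"
begin

lemma holomorphic_on_disc: "f \<in> H \<Longrightarrow> f holomorphic_on disc"
  and zero_in_H: "(\<lambda>z. 0) \<in> H"
  and add_in_H: "f \<in> H \<Longrightarrow> g \<in> H \<Longrightarrow> (\<lambda>z. f z + g z) \<in> H"
  and scale_in_H: "f \<in> H \<Longrightarrow> (\<lambda>z. c * f z) \<in> H"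
  and ip_add_left: "f \<in> H \<Longrightarrow> g \<in> H \<Longrightarrow> h \<in> H \<Longrightarrow> ip (\<lambda>z. f z + g z) h = ip f h + ip g h"
  and ip_scale_left: "f \<in> H \<Longrightarrow> g \<in> H \<Longrightarrow> ip (\<lambda>z. c * f z) g = c * ip f g"
  and ip_conj_sym: "f \<in> H \<Longrightarrow> g \<in> H \<Longrightarrow> ip g f = cnj (ip f g)"
  and ip_self_nonneg: "f \<in> H \<Longrightarrow> Im (ip f f) = 0 \<and> 0 \<le> Re (ip f f)"
  and ip_self_eq_0: "f \<in> H \<Longrightarrow> ip f f = 0 \<Longrightarrow> f = (\<lambda>z. 0)"
  and kernel_in_H: "w \<in> disc \<Longrightarrow> (\<lambda>z. k z w) \<in> H"
  and reproducing: "w \<in> disc \<Longrightarrow> f \<in> H \<Longrightarrow> f w = ip f (\<lambda>z. k z w)"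
  using rkhs unfolding rkhs_disc_def by blast+

lemma sum_in_H: "finite A \<Longrightarrow> (\<And>i. i \<in> A \<Longrightarrow> g i \<in> H) \<Longrightarrow> (\<lambda>z. \<Sum>i\<in>A. c i * g i z) \<in> H"
proof (induction A rule: finite_induct)
  case empty
  then show ?case using zero_in_H by simp
next
  case (insert x F)
  then show ?case using add_in_H[OF scale_in_H[of "g x" "c x"], of "\<lambda>z. \<Sum>i\<in>F. c i * g i z"] by simp
qed

lemma diff_in_H: "f \<in> H \<Longrightarrow> g \<in> H \<Longrightarrow> (\<lambda>z. f z - g z) \<in> H"
  using add_in_H[OF _ scale_in_H[of g "-1"], of f] by simp

lemma ip_sum_left:
  "finite A \<Longrightarrow> (\<And>i. i \<in> A \<Longrightarrow> g i \<in> H) \<Longrightarrow> h \<in> H \<Longrightarrow>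
   ip (\<lambda>z. \<Sum>i\<in>A. c i * g i z) h = (\<Sum>i\<in>A. c i * ip (g i) h)"
proof (induction A rule: finite_induct)
  case empty
  then show ?case using ip_scale_left[OF zero_in_H, of h 0] by simp
next
  case (insert x F)
  have "ip (\<lambda>z. \<Sum>i\<in>insert x F. c i * g i z) h = ip (\<lambda>z. c x * g x z + (\<Sum>i\<in>F. c i * g i z)) h"
    using insert by simp
  also have "\<dots> = ip (\<lambda>z. c x * g x z) h + ip (\<lambda>z. \<Sum>i\<in>F. c i * g i z) h"
    using insert by (intro ip_add_left scale_in_H sum_in_H) auto
  also have "\<dots> = c x * ip (g x) h + (\<Sum>i\<in>F. c i * ip (g i) h)"
    using insert by (simp add: ip_scale_left)
  finally show ?case using insert by simp
qed

lemma ip_sum_right: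
  assumes "finite A" "\<And>i. i \<in> A \<Longrightarrow> g i \<in> H" "h \<in> H"
  shows "ip h (\<lambda>z. \<Sum>i\<in>A. c i * g i z) = (\<Sum>i\<in>A. cnj (c i) * ip h (g i))"
proof -
  have "ip h (\<lambda>z. \<Sum>i\<in>A. c i * g i z) = cnj (ip (\<lambda>z. \<Sum>i\<in>A. c i * g i z) h)"
    using assms by (intro ip_conj_sym sum_in_H) auto
  also have "\<dots> = cnj (\<Sum>i\<in>A. c i * ip (g i) h)" using assms by (simp add: ip_sum_left)
  also have "\<dots> = (\<Sum>i\<in>A. cnj (c i) * ip h (g i))"
    unfolding cnj_sum complex_cnj_mult by (rule sum.cong) (use assms in \<open>auto simp: ip_conj_sym[of _ h]\<close>)
  finally show ?thesis .
qed

lemma ip_diff_diff: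
  assumes "f \<in> H" "g \<in> H"
  shows "ip (\<lambda>z. f z - g z) (\<lambda>z. f z - g z) = ip f f - ip f g - ip g f + ip g g"
proof -
  let ?c = "\<lambda>i::nat. if i = 0 then (1::complex) else -1"
  let ?g = "\<lambda>i::nat. if i = 0 then f else g"
  have diff: "(\<lambda>z. f z - g z) = (\<lambda>z. \<Sum>i\<in>{0,1}. ?c i * ?g i z)" by simp
  have g: "\<And>i. i \<in> {0,1} \<Longrightarrow> ?g i \<in> H" using assms by auto
  have "ip (\<lambda>z. \<Sum>i\<in>{0,1}. ?c i * ?g i z) (\<lambda>z. \<Sum>i\<in>{0,1}. ?c i * ?g i z)
     = (\<Sum>i\<in>{0,1}. ?c i * ip (?g i) (\<lambda>z. \<Sum>i\<in>{0,1}. ?c i * ?g i z))"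
    by (rule ip_sum_left[OF _ g]) (use assms in \<open>auto intro!: diff_in_H\<close>)
  also have "\<dots> = (\<Sum>i\<in>{0,1}. ?c i * (\<Sum>j\<in>{0,1}. cnj (?c j) * ip (?g i) (?g j)))"
    using g by (intro sum.cong refl arg_cong2[where f="(*)"] ip_sum_right) auto
  finally show ?thesis unfolding diff by simp
qed

lemma kernel_eq_ip: "z \<in> disc \<Longrightarrow> w \<in> disc \<Longrightarrow> k z w = ip (\<lambda>x. k x w) (\<lambda>x. k x z)"
  using reproducing[OF _ kernel_in_H] by blast

lemma kernel_herm: "z \<in> disc \<Longrightarrow> w \<in> disc \<Longrightarrow> k z w = cnj (k w z)"
  using kernel_eq_ip[of z w] kernel_eq_ip[of w z] ip_conj_sym[OF kernel_in_H kernel_in_H, of z w] by simp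

lemma kernel_diag_nonneg: "z \<in> disc \<Longrightarrow> Im (k z z) = 0 \<and> 0 \<le> Re (k z z)"
  using kernel_eq_ip[of z z] ip_self_nonneg[OF kernel_in_H, of z] by simp

lemma ip_self_real: "f \<in> H \<Longrightarrow> ip f f = of_real ((hnorm ip f)\<^sup>2)"
  using ip_self_nonneg[of f] by (simp add: hnorm_def complex_eq_iff)

lemma kernel_comb_in_H:
  fixes N :: nat
  assumes "\<And>l. l < N \<Longrightarrow> p l \<in> disc"
  shows "(\<lambda>z. \<Sum>l<N. x l * k z (p l)) \<in> H"
proof -
  have "(\<lambda>z. \<Sum>l\<in>{..<N}. x l * (\<lambda>z. k z (p l)) z) \<in> H"
    by (rule sum_in_H) (auto intro: kernel_in_H assms)
  then show ?thesis by simp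
qed

lemma ip_kernel_comb_right:
  fixes N :: nat
  assumes "u \<in> H" "\<And>l. l < N \<Longrightarrow> p l \<in> disc"
  shows "ip u (\<lambda>z. \<Sum>l<N. x l * k z (p l)) = (\<Sum>l<N. cnj (x l) * u (p l))"
proof -
  have "ip u (\<lambda>z. \<Sum>l\<in>{..<N}. x l * (\<lambda>z. k z (p l)) z)
      = (\<Sum>l\<in>{..<N}. cnj (x l) * ip u (\<lambda>z. k z (p l)))"
    by (rule ip_sum_right) (use assms in \<open>auto intro: kernel_in_H\<close>)
  then show ?thesis using assms reproducing by simp
qed

lemma ip_kernel_comb_self:
  fixes N :: nat
  assumes "\<And>l. l < N \<Longrightarrow> p l \<in> disc"
  shows "ip (\<lambda>z. \<Sum>l<N. x l * k z (p l)) (\<lambda>z. \<Sum>l<N. x l * k z (p l))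
       = quad_form N (\<lambda>i j. k (p i) (p j)) x"
  using ip_kernel_comb_right[OF kernel_comb_in_H[OF assms, where x = x] assms, where x = x]
  by (simp add: quad_form_def sum_distrib_left sum_distrib_right mult_ac)

end

definition pick_form ::
  "(complex \<Rightarrow> complex \<Rightarrow> complex) \<Rightarrow> nat \<Rightarrow> nat \<Rightarrow> (nat \<Rightarrow> complex)
     \<Rightarrow> (nat \<Rightarrow> nat \<Rightarrow> nat \<Rightarrow> complex) \<Rightarrow> (nat \<Rightarrow> nat \<Rightarrow> complex) \<Rightarrow> complex" where
  "pick_form k m n p A v = (\<Sum>j<n. \<Sum>l<n. \<Sum>a<m. \<Sum>b<m.
      cnj (v j a) * (((if a = b then 1 else 0) - (\<Sum>c<m. A j a c * cnj (A l b c))) * k (p j) (p l)) * v l b)"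

lemma complete_pick_pick_form:
  assumes "complete_pick H ip k" "1 \<le> m" "\<And>j. j < n \<Longrightarrow> p j \<in> disc"
    and "\<And>v. Im (pick_form k m n p A v) = 0 \<and> 0 \<le> Re (pick_form k m n p A v)"
  obtains F where "contractive_multiplier H ip m F"
    and "\<And>j a b. j < n \<Longrightarrow> a < m \<Longrightarrow> b < m \<Longrightarrow> F (p j) a b = A j a b"
proof -
  have "\<exists>F. contractive_multiplier H ip m F \<and> (\<forall>j<n. \<forall>a<m. \<forall>b<m. F (p j) a b = A j a b)"
    using assms(1)[unfolded complete_pick_def Let_def, rule_format, OF assms(2,3)
        assms(4)[unfolded pick_form_def]] .
  then show ?thesis using that by blast
qed

lemma pick_form_split:
  "pick_form k m n p A v =
     (\<Sum>a<m. \<Sum>j<n. \<Sum>l<n. cnj (v j a) * k (p j) (p l) * v l a)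
   - (\<Sum>c<m. \<Sum>j<n. \<Sum>l<n. cnj (\<Sum>a<m. cnj (A j a c) * v j a) * k (p j) (p l)
                                * (\<Sum>b<m. cnj (A l b c) * v l b))"
proof -
  have expand: "cnj (v j a) * (((if a = b then 1 else 0) - S) * K) * v l b
      = (if a = b then cnj (v j a) * K * v l a else 0) - cnj (v j a) * S * v l b * K" for j l a b S K
    by (simp add: algebra_simps)
  have inner: "(\<Sum>a<m. \<Sum>b<m. cnj (v j a) * (\<Sum>c<m. A j a c * cnj (A l b c)) * v l b)
      = (\<Sum>c<m. cnj (\<Sum>a<m. cnj (A j a c) * v j a) * (\<Sum>b<m. cnj (A l b c) * v l b))" for j l
  proof -
    have "(\<Sum>a<m. \<Sum>b<m. cnj (v j a) * (\<Sum>c<m. A j a c * cnj (A l b c)) * v l b)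
        = (\<Sum>a<m. \<Sum>b<m. \<Sum>c<m. cnj (v j a) * A j a c * (cnj (A l b c) * v l b))"
      by (simp add: sum_distrib_left sum_distrib_right mult_ac)
    also have "\<dots> = (\<Sum>c<m. \<Sum>a<m. \<Sum>b<m. cnj (v j a) * A j a c * (cnj (A l b c) * v l b))"
      by (rule sum_swap3)
    also have "\<dots> = (\<Sum>c<m. (\<Sum>a<m. cnj (v j a) * A j a c) * (\<Sum>b<m. cnj (A l b c) * v l b))"
      by (simp add: sum_product)
    also have "\<dots> = (\<Sum>c<m. cnj (\<Sum>a<m. cnj (A j a c) * v j a) * (\<Sum>b<m. cnj (A l b c) * v l b))"
      by (simp add: cnj_sum mult.commute)
    finally show ?thesis .
  qed
  have commute_factor: "(\<Sum>c<m. P c * Q c) * K = (\<Sum>c<m. P c * K * Q c)"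
    for P Q :: "nat \<Rightarrow> complex" and K
    by (simp add: sum_distrib_left sum_distrib_right mult_ac)
  have "pick_form k m n p A v = (\<Sum>j<n. \<Sum>l<n. \<Sum>a<m. \<Sum>b<m.
           (if a = b then cnj (v j a) * k (p j) (p l) * v l a else 0)
         - cnj (v j a) * (\<Sum>c<m. A j a c * cnj (A l b c)) * v l b * k (p j) (p l))"
    unfolding pick_form_def expand ..
  also have "\<dots> = (\<Sum>j<n. \<Sum>l<n. (\<Sum>a<m. cnj (v j a) * k (p j) (p l) * v l a)
         - (\<Sum>a<m. \<Sum>b<m. cnj (v j a) * (\<Sum>c<m. A j a c * cnj (A l b c)) * v l b) * k (p j) (p l))"
    by (simp add: sum_subtractf sum_distrib_right)
  also have "\<dots> = (\<Sum>j<n. \<Sum>l<n. (\<Sum>a<m. cnj (v j a) * k (p j) (p l) * v l a)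
         - (\<Sum>c<m. cnj (\<Sum>a<m. cnj (A j a c) * v j a) * (\<Sum>b<m. cnj (A l b c) * v l b)) * k (p j) (p l))"
    by (simp only: inner)
  also have "\<dots> = (\<Sum>j<n. \<Sum>l<n. \<Sum>a<m. cnj (v j a) * k (p j) (p l) * v l a)
      - (\<Sum>j<n. \<Sum>l<n. \<Sum>c<m. cnj (\<Sum>a<m. cnj (A j a c) * v j a) * k (p j) (p l)
                              * (\<Sum>b<m. cnj (A l b c) * v l b))"
    unfolding commute_factor sum_subtractf ..
  also have "\<dots> = (\<Sum>a<m. \<Sum>j<n. \<Sum>l<n. cnj (v j a) * k (p j) (p l) * v l a)
   - (\<Sum>c<m. \<Sum>j<n. \<Sum>l<n. cnj (\<Sum>a<m. cnj (A j a c) * v j a) * k (p j) (p l)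
                                * (\<Sum>b<m. cnj (A l b c) * v l b))"
    by (rule arg_cong2[where f="(-)"]; rule sum_swap3)
  finally show ?thesis .
qed

lemma pick_form_first_row:
  assumes "0 < m"
  shows "pick_form k m N p A (\<lambda>j a. if a = 0 then Y j else 0)
       = quad_form N (\<lambda>j l. (1 - (\<Sum>c<m. A j 0 c * cnj (A l 0 c))) * k (p j) (p l)) Y"
proof -
  have "(\<Sum>a<m. \<Sum>b<m. cnj (if a = 0 then y else 0) * X a b * (if b = 0 then y' else 0))
      = cnj y * X 0 0 * y'" for y y' and X :: "nat \<Rightarrow> nat \<Rightarrow> complex"
  proof -
    have "cnj (if a = 0 then y else 0) * X a b * (if b = 0 then y' else 0)
        = (if b = 0 then (if a = 0 then cnj y * X 0 0 * y' else 0) else 0)" for a b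
      by auto
    then show ?thesis using assms by (simp add: sum.delta)
  qed
  then show ?thesis unfolding pick_form_def quad_form_def by simp
qed

context disc_rkhs
begin

lemma sum_ip_multiplier_kernel_comb:
  fixes N m :: nat
  assumes p: "\<And>l. l < N \<Longrightarrow> p l \<in> disc"
    and MF_h: "\<And>a. a < m \<Longrightarrow> (\<lambda>z. \<Sum>b<m. F z a b * h b z) \<in> H"
    and h: "\<And>c. h c = (\<lambda>z. \<Sum>l<N. (\<Sum>b<m. cnj (F (p l) b c) * y l b) * k z (p l))"
  shows "(\<Sum>a<m. ip (\<lambda>z. \<Sum>b<m. F z a b * h b z) (\<lambda>z. \<Sum>l<N. y l a * k z (p l)))
       = (\<Sum>c<m. ip (h c) (h c))"
proof -
  have hH: "h c \<in> H" for c unfolding h by (rule kernel_comb_in_H) (rule p)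
  have "(\<Sum>a<m. ip (\<lambda>z. \<Sum>b<m. F z a b * h b z) (\<lambda>z. \<Sum>l<N. y l a * k z (p l)))
      = (\<Sum>a<m. \<Sum>l<N. \<Sum>b<m. cnj (y l a) * F (p l) a b * h b (p l))"
    using ip_kernel_comb_right[OF MF_h, of _ N p] p by (simp add: sum_distrib_left mult_ac)
  also have "\<dots> = (\<Sum>b<m. \<Sum>l<N. \<Sum>a<m. cnj (y l a) * F (p l) a b * h b (p l))"
    by (subst sum_swap3) (rule sum.cong[OF refl], rule sum.swap)
  also have "\<dots> = (\<Sum>c<m. ip (h c) (h c))"
  proof (rule sum.cong[OF refl])
    fix b
    have "ip (h b) (h b) = ip (h b) (\<lambda>z. \<Sum>l<N. (\<Sum>a<m. cnj (F (p l) a b) * y l a) * k z (p l))"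
      by (subst (2) h) (rule refl)
    also have "\<dots> = (\<Sum>l<N. cnj (\<Sum>a<m. cnj (F (p l) a b) * y l a) * h b (p l))"
      by (rule ip_kernel_comb_right[OF hH]) (rule p)
    finally show "(\<Sum>l<N. \<Sum>a<m. cnj (y l a) * F (p l) a b * h b (p l)) = ip (h b) (h b)"
      by (simp add: cnj_sum sum_distrib_right mult_ac) (simp add: sum_distrib_left mult_ac)
  qed
  finally show ?thesis .
qed

text \<open>For h = M_F^* f, computed on kernel functions via the previous lemma,
  <M_F h, f> = |h|^2, so 0 \<le> |f - M_F h|^2 \<le> |f|^2 - |h|^2, which is the Pick form.\<close>

lemma contractive_multiplier_pick_form_nonneg:
  fixes N m :: nat
  assumes cm: "contractive_multiplier H ip m F" and p: "\<And>j. j < N \<Longrightarrow> p j \<in> disc"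
  shows "Im (pick_form k m N p (\<lambda>j. F (p j)) y) = 0 \<and> 0 \<le> Re (pick_form k m N p (\<lambda>j. F (p j)) y)"
proof -
  define f where "f a = (\<lambda>z. \<Sum>l<N. y l a * k z (p l))" for a
  define h where "h c = (\<lambda>z. \<Sum>l<N. (\<Sum>b<m. cnj (F (p l) b c) * y l b) * k z (p l))" for c
  define Mh where "Mh a = (\<lambda>z. \<Sum>b<m. F z a b * h b z)" for a
  have fH: "f a \<in> H" for a unfolding f_def by (rule kernel_comb_in_H) (rule p)
  have hH: "h a \<in> H" for a unfolding h_def by (rule kernel_comb_in_H) (rule p)
  have MhH: "a < m \<Longrightarrow> Mh a \<in> H" for a
    using cm hH unfolding contractive_multiplier_def Mh_def by blast
  have contr: "(\<Sum>a<m. (hnorm ip (Mh a))\<^sup>2) \<le> (\<Sum>a<m. (hnorm ip (h a))\<^sup>2)"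
    using cm hH unfolding contractive_multiplier_def Mh_def by blast
  define FF where "FF = (\<Sum>a<m. ip (f a) (f a))"
  define HH where "HH = (\<Sum>a<m. ip (h a) (h a))"
  have "pick_form k m N p (\<lambda>j. F (p j)) y = FF - HH"
    unfolding pick_form_split FF_def HH_def f_def h_def
    by (simp add: ip_kernel_comb_self[OF p] quad_form_def)
  moreover have "FF = of_real (\<Sum>a<m. (hnorm ip (f a))\<^sup>2)"
    and "HH = of_real (\<Sum>a<m. (hnorm ip (h a))\<^sup>2)"
    unfolding FF_def HH_def by (simp_all add: ip_self_real fH hH)
  moreover have "(\<Sum>a<m. ip (Mh a) (f a)) = HH"
    unfolding Mh_def f_def HH_def by (rule sum_ip_multiplier_kernel_comb[OF p MhH[unfolded Mh_def] h_def])
  moreover have "0 \<le> Re (\<Sum>a<m. ip (\<lambda>z. f a z - Mh a z) (\<lambda>z. f a z - Mh a z))"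
    unfolding Re_sum by (rule sum_nonneg) (use ip_self_nonneg[OF diff_in_H[OF fH MhH]] in auto)
  moreover have "\<dots> = Re FF - 2 * Re (\<Sum>a<m. ip (Mh a) (f a)) + (\<Sum>a<m. (hnorm ip (Mh a))\<^sup>2)"
    unfolding FF_def using ip_diff_diff[OF fH MhH] ip_conj_sym[OF MhH fH] ip_self_real[OF MhH]
    by (simp add: Re_sum sum_subtractf sum.distrib)
  ultimately show ?thesis using contr by simp
qed

lemma contractive_multiplier_first_row_pos_semidef:
  fixes N m :: nat
  assumes "contractive_multiplier H ip m F" "0 < m" "\<And>j. j < N \<Longrightarrow> p j \<in> disc"
  shows "pos_semidef N (\<lambda>j l. (1 - (\<Sum>c<m. F (p j) 0 c * cnj (F (p l) 0 c))) * k (p j) (p l))"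
  unfolding pos_semidef_def
proof
  fix Y
  show "Im (quad_form N (\<lambda>j l. (1 - (\<Sum>c<m. F (p j) 0 c * cnj (F (p l) 0 c))) * k (p j) (p l)) Y) = 0 \<and>
        0 \<le> Re (quad_form N (\<lambda>j l. (1 - (\<Sum>c<m. F (p j) 0 c * cnj (F (p l) 0 c))) * k (p j) (p l)) Y)"
    using contractive_multiplier_pick_form_nonneg[OF assms(1,3), where y = "\<lambda>j a. if a = 0 then Y j else 0"]
    unfolding pick_form_first_row[OF assms(2)] .
qed

end

section \<open>Rotation invariance\<close>

lemma convex_scaled_disc: "convex {\<zeta>::complex. cmod (\<zeta> * z) < 1}"
proof -
  have "{\<zeta>::complex. cmod (\<zeta> * z) < 1} = (\<lambda>\<zeta>. \<zeta> * z) -` ball 0 1" by auto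
  then show ?thesis
    using convex_linear_vimage[OF bounded_linear.linear[OF bounded_linear_mult_left] convex_ball]
    by metis
qed

lemma one_islimpt_sphere: "(1::complex) islimpt sphere 0 1"
proof (rule connected_imp_perfect)
  show "connected (sphere (0::complex) 1)" by (rule connected_sphere) simp
  show "(1::complex) \<in> sphere 0 1" by simp
  have "(1::complex) \<in> sphere 0 1" "(-1::complex) \<in> sphere 0 1" by auto
  then show "\<And>x. sphere (0::complex) 1 \<noteq> {x}" by (metis neg_equal_iff_equal one_neq_neg_one singletonD)
qed

locale rotation_invariant_rkhs = disc_rkhs +
  assumes rot: "rotation_invariant H ip"
begin

lemma rotate_in_H: "h \<in> H \<Longrightarrow> cmod \<xi> = 1 \<Longrightarrow> (\<lambda>z. h (\<xi> * z)) \<in> H"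
  using rot unfolding rotation_invariant_def by blast

lemma ip_rotate_self:
  assumes "h \<in> H" "cmod \<xi> = 1"
  shows "ip (\<lambda>z. h (\<xi> * z)) (\<lambda>z. h (\<xi> * z)) = ip h h"
proof -
  have "hnorm ip (\<lambda>z. h (\<xi> * z)) = hnorm ip h"
    using rot assms unfolding rotation_invariant_def by blast
  then show ?thesis using ip_self_real[OF rotate_in_H[OF assms]] ip_self_real[OF assms(1)] by simp
qed

lemma ip_self_rotated_kernel_diff:
  assumes "cmod \<xi> = 1" "w \<in> disc"
  shows "ip (\<lambda>z. k (\<xi> * z) (\<xi> * w) - k z w) (\<lambda>z. k (\<xi> * z) (\<xi> * w) - k z w)
          = k w w - k (\<xi> * w) (\<xi> * w)"
proof -
  have \<xi>w: "\<xi> * w \<in> disc" using mult_in_disc assms by simp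
  define g where "g = (\<lambda>z. k (\<xi> * z) (\<xi> * w))"
  have gH: "g \<in> H" unfolding g_def using rotate_in_H[OF kernel_in_H[OF \<xi>w] assms(1)] .
  have kw: "(\<lambda>z. k z w) \<in> H" using kernel_in_H assms by blast
  have gg: "ip g g = k (\<xi> * w) (\<xi> * w)"
    unfolding g_def using ip_rotate_self[OF kernel_in_H[OF \<xi>w] assms(1)] kernel_eq_ip[OF \<xi>w \<xi>w] by simp
  have gk: "ip g (\<lambda>z. k z w) = k (\<xi> * w) (\<xi> * w)"
    using reproducing[OF assms(2) gH] unfolding g_def by simp
  have "cnj (k (\<xi> * w) (\<xi> * w)) = k (\<xi> * w) (\<xi> * w)"
    using kernel_diag_nonneg[OF \<xi>w] by (simp add: complex_eq_iff)
  then have kg: "ip (\<lambda>z. k z w) g = k (\<xi> * w) (\<xi> * w)"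
    using ip_conj_sym[OF gH kw] gk by simp
  have kk: "ip (\<lambda>z. k z w) (\<lambda>z. k z w) = k w w" using kernel_eq_ip[OF assms(2) assms(2)] by simp
  have "ip (\<lambda>z. g z - k z w) (\<lambda>z. g z - k z w) = k w w - k (\<xi> * w) (\<xi> * w)"
    unfolding ip_diff_diff[OF gH kw] gg gk kg kk by simp
  then show ?thesis unfolding g_def .
qed

text \<open>Rotating w by \<xi> and back by cnj \<xi> shows that k(w,w) and k(\<xi> w, \<xi> w) dominate each other,
  so the previous norm vanishes.\<close>

lemma kernel_rotate:
  assumes "cmod \<xi> = 1" "w \<in> disc"
  shows "k (\<xi> * z) (\<xi> * w) = k z w"
proof -
  have \<xi>w: "\<xi> * w \<in> disc" using mult_in_disc assms by simp
  have "cmod (cnj \<xi>) = 1" using assms by simp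
  have "cnj \<xi> * (\<xi> * w) = w"
    using complex_norm_square[of \<xi>] assms(1) by (simp add: mult.assoc[symmetric] mult.commute)
  have DH: "(\<lambda>z. k (\<xi> * z) (\<xi> * w) - k z w) \<in> H"
    by (intro diff_in_H rotate_in_H kernel_in_H \<xi>w assms)
  have "0 \<le> Re (k w w - k (\<xi> * w) (\<xi> * w))"
    using ip_self_rotated_kernel_diff[OF assms] ip_self_nonneg[OF DH] by simp
  moreover have "0 \<le> Re (k (\<xi> * w) (\<xi> * w) - k w w)"
  proof -
    have "(\<lambda>z. k (cnj \<xi> * z) w - k z (\<xi> * w)) \<in> H"
      by (intro diff_in_H rotate_in_H kernel_in_H \<xi>w assms(2) \<open>cmod (cnj \<xi>) = 1\<close>)
    from ip_self_nonneg[OF this] show ?thesis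
      using ip_self_rotated_kernel_diff[OF \<open>cmod (cnj \<xi>) = 1\<close> \<xi>w]
      unfolding \<open>cnj \<xi> * (\<xi> * w) = w\<close> by simp
  qed
  ultimately have "k w w - k (\<xi> * w) (\<xi> * w) = 0"
    using kernel_diag_nonneg[OF \<xi>w] kernel_diag_nonneg[OF assms(2)] by (simp add: complex_eq_iff)
  then have "(\<lambda>z. k (\<xi> * z) (\<xi> * w) - k z w) = (\<lambda>z. 0)"
    using ip_self_rotated_kernel_diff[OF assms] by (intro ip_self_eq_0[OF DH]) simp
  then show ?thesis by (simp add: fun_eq_iff)
qed

text \<open>Both sides are holomorphic in \<zeta> on a convex open set containing the unit circle,
  on which they agree by rotation invariance.\<close>

lemma kernel_mult_left_eq_mult_right_cnj:
  assumes z: "z \<in> disc" and w: "w \<in> disc" and "cmod (\<zeta> * z) < 1" "cmod (\<zeta> * w) < 1"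
  shows "k (\<zeta> * z) w = k z (cnj \<zeta> * w)"
proof -
  define S where "S = {\<zeta>::complex. cmod (\<zeta> * z) < 1} \<inter> {\<zeta>. cmod (\<zeta> * w) < 1}"
  have "open S" unfolding S_def by (intro open_Int open_Collect_less continuous_intros)
  have "connected S" unfolding S_def by (intro convex_connected convex_Int convex_scaled_disc)
  have "sphere 0 1 \<subseteq> S" "1 \<in> S" using z w unfolding S_def by (auto simp: norm_mult)
  have "(\<lambda>y. k y w) \<circ> (\<lambda>y. y * z) holomorphic_on S"
    by (rule holomorphic_on_compose_gen[where t = disc])
       (auto intro!: holomorphic_intros holomorphic_on_disc kernel_in_H w simp: S_def norm_mult)
  then have left: "(\<lambda>\<zeta>. k (\<zeta> * z) w) holomorphic_on S" unfolding o_def .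
  have "(\<lambda>y. k y z) \<circ> (\<lambda>y. y * w) holomorphic_on cnj ` S"
    by (rule holomorphic_on_compose_gen[where t = disc])
       (auto intro!: holomorphic_intros holomorphic_on_disc kernel_in_H z simp: S_def norm_mult)
  then have "cnj \<circ> (\<lambda>y. k (y * w) z) \<circ> cnj holomorphic_on S"
    unfolding o_def[of "\<lambda>y. k y z"] by (rule holomorphic_on_compose_cnj_cnj[OF _ \<open>open S\<close>])
  moreover have "(cnj \<circ> (\<lambda>y. k (y * w) z) \<circ> cnj) x = k z (cnj x * w)" if "x \<in> S" for x
    using that kernel_herm[OF z, of "cnj x * w"] unfolding S_def by (simp add: norm_mult)
  ultimately have right: "(\<lambda>x. k z (cnj x * w)) holomorphic_on S"
    by (rule holomorphic_transform)
  have "k (\<zeta> * z) w - k z (cnj \<zeta> * w) = 0"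
  proof (rule analytic_continuation[OF holomorphic_on_diff[OF left right] \<open>open S\<close> \<open>connected S\<close>
        \<open>sphere 0 1 \<subseteq> S\<close> \<open>1 \<in> S\<close> one_islimpt_sphere])
    show "\<zeta> \<in> S" using assms unfolding S_def by simp
    fix x :: complex assume "x \<in> sphere 0 1"
    then have x1: "cmod (cnj x) = 1" by simp
    have eq: "cnj x * (x * z) = z"
      using complex_norm_square[of x] \<open>x \<in> sphere 0 1\<close> by (simp add: mult.assoc[symmetric] mult.commute)
    show "k (x * z) w - k z (cnj x * w) = 0" using kernel_rotate[OF x1 w, of "x * z"] unfolding eq by simp
  qed
  then show ?thesis by simp
qed

lemma kernel_eq_scaled:
  assumes z: "z \<in> disc" and w: "w \<in> disc" and c: "cmod (z * cnj w) < c" "c < 1"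
  shows "k z w = k (z * cnj w / of_real c) (of_real c)"
proof -
  have "c > 0" using c(1) norm_ge_zero[of "z * cnj w"] by linarith
  define \<zeta> where "\<zeta> = cnj w / of_real c"
  have "k (\<zeta> * z) (of_real c) = k z (cnj \<zeta> * of_real c)"
  proof (rule kernel_mult_left_eq_mult_right_cnj[OF z])
    show "complex_of_real c \<in> disc" "cmod (\<zeta> * z) < 1" "cmod (\<zeta> * of_real c) < 1"
      using c w \<open>c > 0\<close> by (simp_all add: \<zeta>_def norm_mult norm_divide divide_less_eq mult.commute)
  qed
  moreover have "cnj \<zeta> * of_real c = w" "\<zeta> * z = z * cnj w / of_real c"
    unfolding \<zeta>_def using \<open>c > 0\<close> by simp_all
  ultimately show ?thesis by simp
qed

text \<open>For |t| < r < 1 both factors of t = (t / r) * cnj r lie in the disc, and by the previous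
  lemma k(t / r, r) does not depend on r; the profile fixes r = (1 + |t|) / 2.\<close>

definition profile_radius :: "complex \<Rightarrow> real" where
  "profile_radius t = (1 + cmod t) / 2"

definition kernel_profile :: "complex \<Rightarrow> complex" where
  "kernel_profile t = k (t / of_real (profile_radius t)) (of_real (profile_radius t))"

lemma profile_radius_bounds: "cmod t < 1 \<Longrightarrow> cmod t < profile_radius t \<and> profile_radius t < 1"
  unfolding profile_radius_def by simp

lemma kernel_eq_profile: "z \<in> disc \<Longrightarrow> w \<in> disc \<Longrightarrow> k z w = kernel_profile (z * cnj w)"
  unfolding kernel_profile_def
  using kernel_eq_scaled profile_radius_bounds mult_cnj_in_disc by simp

lemma kernel_profile_eq_scaled:
  assumes "cmod t0 < 1" "cmod t < profile_radius t0"
  shows "kernel_profile t = k (t / of_real (profile_radius t0)) (of_real (profile_radius t0))"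
proof -
  define c where "c = profile_radius t0"
  have "cmod t0 < c" "c < 1" using profile_radius_bounds[OF assms(1)] by (auto simp: c_def)
  then have "c > 0" using norm_ge_zero[of t0] by linarith
  have "t / of_real c \<in> disc" "complex_of_real c \<in> disc"
    using assms(2) \<open>c > 0\<close> \<open>c < 1\<close> by (simp_all add: c_def norm_divide)
  moreover have "t / of_real c * cnj (of_real c) = t" using \<open>c > 0\<close> by simp
  ultimately show ?thesis using kernel_eq_profile unfolding c_def by metis
qed

lemma holomorphic_kernel_profile: "kernel_profile holomorphic_on disc"
proof -
  have "kernel_profile field_differentiable (at t0)" if "t0 \<in> disc" for t0
  proof -
    define c where "c = profile_radius t0"
    have "cmod t0 < c" "c < 1" using profile_radius_bounds that by (auto simp: c_def)
    then have "c > 0" using norm_ge_zero[of t0] by linarith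
    have "(\<lambda>y. k y (of_real c)) \<circ> (\<lambda>t. t / of_real c) holomorphic_on ball 0 c"
      by (rule holomorphic_on_compose_gen[where t = disc])
         (use \<open>c > 0\<close> \<open>c < 1\<close> in \<open>auto intro!: holomorphic_intros holomorphic_on_disc kernel_in_H
                                       simp: norm_divide\<close>)
    then have "kernel_profile holomorphic_on ball 0 c"
      by (rule holomorphic_transform) (use kernel_profile_eq_scaled that in \<open>auto simp: c_def\<close>)
    then show ?thesis
      by (rule holomorphic_on_imp_differentiable_at) (use \<open>cmod t0 < c\<close> in auto)
  qed
  then show ?thesis by (simp add: holomorphic_on_open field_differentiable_def)
qed

lemma disc_as_mult_cnj: "t \<in> disc \<Longrightarrow> \<exists>z\<in>disc. \<exists>w\<in>disc. t = z * cnj w"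
proof -
  assume "t \<in> disc"
  define c where "c = profile_radius t"
  have "cmod t < c" "c < 1" using profile_radius_bounds \<open>t \<in> disc\<close> by (auto simp: c_def)
  then have "c > 0" using norm_ge_zero[of t] by linarith
  show ?thesis
    by (rule bexI[of _ "t / of_real c"], rule bexI[of _ "of_real c"])
       (use \<open>cmod t < c\<close> \<open>c < 1\<close> \<open>c > 0\<close> in \<open>auto simp: norm_divide\<close>)
qed

lemma kernel_0_right: "z \<in> disc \<Longrightarrow> k z 0 = k 0 0"
  and kernel_0_left: "w \<in> disc \<Longrightarrow> k 0 w = k 0 0"
  using kernel_eq_profile[of z 0] kernel_eq_profile[of 0 w] kernel_eq_profile[of 0 0] by simp_all

end

locale irreducible_rotation_invariant_rkhs = rotation_invariant_rkhs +
  assumes irr: "irreducible_kernel k"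
begin

lemma kernel_nonzero: "z \<in> disc \<Longrightarrow> w \<in> disc \<Longrightarrow> k z w \<noteq> 0"
  using irr unfolding irreducible_kernel_def by blast

lemma kernel_diag_pos: "z \<in> disc \<Longrightarrow> Im (k z z) = 0 \<and> 0 < Re (k z z)"
  using kernel_diag_nonneg kernel_nonzero by (fastforce simp: complex_eq_iff)

lemma kernel_00_real: "k 0 0 = of_real (Re (k 0 0))"
  and kernel_00_pos: "0 < Re (k 0 0)"
  using kernel_diag_pos[of 0] by (simp_all add: complex_eq_iff)

lemma kernel_profile_nonzero: "t \<in> disc \<Longrightarrow> kernel_profile t \<noteq> 0"
  using disc_as_mult_cnj kernel_eq_profile kernel_nonzero by metis

definition phi :: "complex \<Rightarrow> complex" where
  "phi t = 1 - k 0 0 / kernel_profile t"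

definition phi_coeff :: "nat \<Rightarrow> complex" where
  "phi_coeff n = (deriv ^^ n) phi 0 / fact n"

lemma phi_kernel: "z \<in> disc \<Longrightarrow> w \<in> disc \<Longrightarrow> phi (z * cnj w) = 1 - k 0 0 / k z w"
  unfolding phi_def using kernel_eq_profile by simp

lemma phi_sums: "t \<in> disc \<Longrightarrow> (\<lambda>n. phi_coeff n * t ^ n) sums phi t"
proof -
  have "phi holomorphic_on disc"
    unfolding phi_def using holomorphic_kernel_profile kernel_profile_nonzero
    by (intro holomorphic_intros) auto
  then show "t \<in> disc \<Longrightarrow> ?thesis"
    unfolding phi_coeff_def using holomorphic_power_series[of phi 0 1 t] by simp
qed

lemma phi_coeff_0: "phi_coeff 0 = 0"
  using phi_kernel[of 0 0] kernel_nonzero[of 0 0] by (simp add: phi_coeff_def)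

lemma inverse_kernel_eq_phi: "z \<in> disc \<Longrightarrow> w \<in> disc \<Longrightarrow> 1 / k z w = (1 - phi (z * cnj w)) / k 0 0"
  using phi_kernel[of z w] kernel_nonzero[of z w] kernel_nonzero[of 0 0] by (simp add: field_simps)

lemma phi_herm: "z \<in> disc \<Longrightarrow> w \<in> disc \<Longrightarrow> phi (w * cnj z) = cnj (phi (z * cnj w))"
  using phi_kernel kernel_herm[of w z] kernel_00_real
  by (metis complex_cnj_cnj complex_cnj_complex_of_real complex_cnj_diff complex_cnj_divide complex_cnj_one)

lemma phi_diag: "z \<in> disc \<Longrightarrow> phi (z * cnj z) = of_real (1 - Re (k 0 0) / Re (k z z))"
  using phi_kernel[of z z] kernel_diag_pos[of z] kernel_00_real
  by (simp add: complex_eq_iff Re_divide Im_divide power2_eq_square)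

end

section \<open>The complete Pick property\<close>

text \<open>Pick data at the points 0, \<lambda>_0, ..., \<lambda>_(n-1): the zero matrix at 0, and at \<lambda>_j the matrix
  whose first row is the Gram vector U_j of the kernel 1 - k(0,0)/k.\<close>

definition gram_targets :: "nat \<Rightarrow> (nat \<Rightarrow> nat \<Rightarrow> complex) \<Rightarrow> nat \<Rightarrow> nat \<Rightarrow> nat \<Rightarrow> complex" where
  "gram_targets M U = case_nat (\<lambda>a c. 0) (\<lambda>j a c. if a = 0 \<and> c < M then U j c else 0)"

locale rotation_invariant_pick_space = irreducible_rotation_invariant_rkhs +
  assumes cp: "complete_pick H ip k"
begin

lemma pick_entry_gram_targets:
  assumes lam: "\<And>i. i < n \<Longrightarrow> lam i \<in> disc"
    and gram: "\<And>i j. i < n \<Longrightarrow> j < n \<Longrightarrow> phi (lam i * cnj (lam j)) = (\<Sum>c<M. U i c * cnj (U j c))"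
    and "j < Suc n" "l < Suc n"
  defines "A \<equiv> gram_targets M U" and "\<mu> \<equiv> case_nat 0 lam"
  shows "((if a = b then 1 else 0) - (\<Sum>c<Suc M. A j a c * cnj (A l b c))) * k (\<mu> j) (\<mu> l)
       = (if a = b then (if a = 0 then k 0 0 else k (\<mu> j) (\<mu> l)) else 0)"
proof -
  have \<mu>: "\<mu> i \<in> disc" if "i < Suc n" for i
    using lam that by (cases i) (auto simp: \<mu>_def)
  show ?thesis
  proof (cases "a = 0 \<and> b = 0 \<and> j \<noteq> 0 \<and> l \<noteq> 0")
    case True
    then obtain j' l' where j': "j = Suc j'" "j' < n" and l': "l = Suc l'" "l' < n"
      using \<open>j < Suc n\<close> \<open>l < Suc n\<close> by (metis Suc_less_SucD not0_implies_Suc)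
    have "(\<Sum>c<Suc M. A j a c * cnj (A l b c)) = phi (lam j' * cnj (lam l'))"
      using True gram[OF j'(2) l'(2)] by (simp add: A_def gram_targets_def j' l')
    then show ?thesis
      using True phi_kernel[OF lam lam, OF j'(2) l'(2)] kernel_nonzero[OF lam lam, OF j'(2) l'(2)]
      by (simp add: \<mu>_def j' l')
  next
    case False
    then have "(\<Sum>c<Suc M. A j a c * cnj (A l b c)) = 0"
      by (intro sum.neutral) (auto simp: A_def gram_targets_def split: nat.split)
    moreover have "k (\<mu> j) (\<mu> l) = k 0 0" if "j = 0 \<or> l = 0"
      using that kernel_0_left[OF \<mu>] kernel_0_right[OF \<mu>] \<open>j < Suc n\<close> \<open>l < Suc n\<close>
      by (auto simp: \<mu>_def)
    ultimately show ?thesis using False by auto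
  qed
qed

lemma pick_form_gram_targets_nonneg:
  assumes lam: "\<And>i. i < n \<Longrightarrow> lam i \<in> disc"
    and gram: "\<And>i j. i < n \<Longrightarrow> j < n \<Longrightarrow> phi (lam i * cnj (lam j)) = (\<Sum>c<M. U i c * cnj (U j c))"
  shows "Im (pick_form k (Suc M) (Suc n) (case_nat 0 lam) (gram_targets M U) v) = 0
       \<and> 0 \<le> Re (pick_form k (Suc M) (Suc n) (case_nat 0 lam) (gram_targets M U) v)"
proof -
  define P where "P = pick_form k (Suc M) (Suc n) (case_nat 0 lam) (gram_targets M U) v"
  define \<mu> where "\<mu> = case_nat 0 lam"
  have \<mu>: "\<mu> i \<in> disc" if "i < Suc n" for i
    using lam that by (cases i) (auto simp: \<mu>_def)
  define T where "T a = (\<Sum>j<Suc n. \<Sum>l<Suc n. cnj (v j a) * (if a = 0 then k 0 0 else k (\<mu> j) (\<mu> l)) * v l a)" for a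
  have "P = (\<Sum>j<Suc n. \<Sum>l<Suc n. \<Sum>a<Suc M. \<Sum>b<Suc M.
              cnj (v j a) * (if a = b then (if a = 0 then k 0 0 else k (\<mu> j) (\<mu> l)) else 0) * v l b)"
    unfolding P_def pick_form_def \<mu>_def[symmetric]
    using pick_entry_gram_targets[where lam = lam and n = n and M = M and U = U, OF lam gram,
        folded \<mu>_def]
    by (intro sum.cong refl) (simp only: lessThan_iff)
  also have "\<dots> = (\<Sum>j<Suc n. \<Sum>l<Suc n. \<Sum>a<Suc M. cnj (v j a) * (if a = 0 then k 0 0 else k (\<mu> j) (\<mu> l)) * v l a)"
  proof -
    have "(\<Sum>b<Suc M. cnj (v j a) * (if a = b then X else 0) * v l b)
        = (if a < Suc M then cnj (v j a) * X * v l a else 0)" for j l a and X :: complex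
    proof -
      have e: "(\<lambda>b. cnj (v j a) * (if a = b then X else 0) * v l b)
          = (\<lambda>b. if a = b then cnj (v j a) * X * v l a else 0)"
        by auto
      show ?thesis unfolding e by (simp only: sum.delta' finite_lessThan lessThan_iff)
    qed
    then show ?thesis by (intro sum.cong refl) simp
  qed
  also have "\<dots> = (\<Sum>a<Suc M. T a)" unfolding T_def by (rule sum_swap3)
  finally have P: "P = (\<Sum>a<Suc M. T a)" .
  have "Im (T a) = 0 \<and> 0 \<le> Re (T a)" for a
  proof (cases "a = 0")
    case True
    have "T a = k 0 0 * (cnj (\<Sum>j<Suc n. v j a) * (\<Sum>l<Suc n. v l a))"
      unfolding T_def using True
      by (simp add: sum_product cnj_sum sum_distrib_left mult_ac del: sum.lessThan_Suc)
    also have "cnj (\<Sum>j<Suc n. v j a) * (\<Sum>l<Suc n. v l a) = of_real ((cmod (\<Sum>l<Suc n. v l a))\<^sup>2)"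
      by (metis complex_norm_square mult.commute)
    finally show ?thesis using kernel_diag_pos[of 0] by simp
  next
    case False
    then have "T a = quad_form (Suc n) (\<lambda>i j. k (\<mu> i) (\<mu> j)) (\<lambda>l. v l a)"
      unfolding T_def quad_form_def by simp
    then show ?thesis
      using ip_kernel_comb_self[where p = \<mu> and N = "Suc n" and x = "\<lambda>l. v l a", OF \<mu>]
        ip_self_nonneg[OF kernel_comb_in_H[where p = \<mu> and N = "Suc n" and x = "\<lambda>l. v l a", OF \<mu>]]
      by simp
  qed
  then show ?thesis unfolding P_def[symmetric] P Im_sum Re_sum by (simp add: sum_nonneg)
qed

text \<open>For a solution F of the Pick problem with the data gram_targets at 0, \<lambda>_0, ..., \<lambda>_(n-1),
  the first-row Pick matrix at 0, \<lambda>_0, ..., \<lambda>_n is positive semidefinite with constant leading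
  block k(0,0), which makes the first row of F(\<lambda>_n) a Gram vector for \<lambda>_n.\<close>

lemma pick_interpolant_first_row:
  fixes n M :: nat
  assumes lam: "\<And>i. i < Suc n \<Longrightarrow> lam i \<in> disc"
    and gram: "\<And>i j. i < n \<Longrightarrow> j < n \<Longrightarrow> phi (lam i * cnj (lam j)) = (\<Sum>c<M. U i c * cnj (U j c))"
    and F: "contractive_multiplier H ip (Suc M) F"
    and F_interp: "\<And>j a b. j < Suc n \<Longrightarrow> a < Suc M \<Longrightarrow> b < Suc M \<Longrightarrow>
                     F (case_nat 0 lam j) a b = gram_targets M U j a b"
  shows "\<forall>i<n. phi (lam i * cnj (lam n)) = (\<Sum>c<M. U i c * cnj (F (lam n) 0 c))"
    and "(\<Sum>c<Suc M. (cmod (F (lam n) 0 c))\<^sup>2) \<le> 1 - Re (k 0 0) / Re (k (lam n) (lam n))"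
proof -
  have lam_n: "\<And>i. i < n \<Longrightarrow> lam i \<in> disc" using lam by simp
  define \<mu> where "\<mu> = case_nat 0 lam"
  have \<mu>: "\<mu> i \<in> disc" if "i < Suc (Suc n)" for i
    using lam that by (cases i) (auto simp: \<mu>_def)
  define B where "B j l = (1 - (\<Sum>c<Suc M. F (\<mu> j) 0 c * cnj (F (\<mu> l) 0 c))) * k (\<mu> j) (\<mu> l)" for j l
  have F_row: "(\<Sum>c<Suc M. F (\<mu> j) 0 c * cnj (F (\<mu> l) 0 c)) = (\<Sum>c<Suc M. gram_targets M U j 0 c * cnj (F (\<mu> l) 0 c))"
    if "j < Suc n" for j l
    using F_interp[OF that] by (intro sum.cong) (auto simp: \<mu>_def)
  have psd: "pos_semidef (Suc (Suc n)) B"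
    unfolding B_def by (rule contractive_multiplier_first_row_pos_semidef[OF F]) (use \<mu> in auto)
  have B_block: "B j l = k 0 0" if "j < Suc n" "l < Suc n" for j l
    using pick_entry_gram_targets[where lam = lam and n = n and M = M and U = U, OF lam_n gram that, of 0 0]
      F_row[OF that(1), of l] F_interp[OF that(2)]
    by (simp add: B_def \<mu>_def)
  have B_herm: "B (Suc n) j = cnj (B j (Suc n))" if "j < Suc (Suc n)" for j
    using kernel_herm[OF \<mu>[OF that] \<mu>[of "Suc n"]] by (simp add: B_def cnj_sum mult.commute)
  have B_0: "B 0 (Suc n) = k 0 0"
    using F_row[of 0 "Suc n"] kernel_0_left[OF lam[of n]] by (simp add: B_def gram_targets_def \<mu>_def)
  show "\<forall>i<n. phi (lam i * cnj (lam n)) = (\<Sum>c<M. U i c * cnj (F (lam n) 0 c))"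
  proof (intro allI impI)
    fix i assume "i < n"
    have row: "(\<Sum>c<Suc M. F (\<mu> (Suc i)) 0 c * cnj (F (\<mu> (Suc n)) 0 c)) = (\<Sum>c<M. U i c * cnj (F (lam n) 0 c))"
      using F_row[of "Suc i" "Suc n"] \<open>i < n\<close> by (simp add: gram_targets_def \<mu>_def)
    have "B (Suc i) (Suc n) = k 0 0"
      using pos_semidef_constant_block_column[OF psd B_block B_herm zero_less_Suc B_0] \<open>i < n\<close> by simp
    then have "(1 - (\<Sum>c<M. U i c * cnj (F (lam n) 0 c))) * k (lam i) (lam n) = k 0 0"
      unfolding B_def row by (simp add: \<mu>_def)
    then have "1 - (\<Sum>c<M. U i c * cnj (F (lam n) 0 c)) = k 0 0 / k (lam i) (lam n)"
      using kernel_nonzero[OF lam lam, of i n] \<open>i < n\<close> by (simp add: eq_divide_eq)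
    then have "(\<Sum>c<M. U i c * cnj (F (lam n) 0 c)) = 1 - k 0 0 / k (lam i) (lam n)"
      by (simp add: diff_eq_eq eq_diff_eq add.commute)
    then show "phi (lam i * cnj (lam n)) = (\<Sum>c<M. U i c * cnj (F (lam n) 0 c))"
      using phi_kernel[OF lam lam, of i n] \<open>i < n\<close> by simp
  qed
  have "Re (k 0 0) \<le> Re (B (Suc n) (Suc n))"
    using B_block[of 0 0] B_0 B_herm[of 0] kernel_diag_pos[of 0]
    by (intro pos_semidef_corner[OF psd]) simp_all
  moreover have "(\<Sum>c<Suc M. F (lam n) 0 c * cnj (F (lam n) 0 c)) = of_real (\<Sum>c<Suc M. (cmod (F (lam n) 0 c))\<^sup>2)"
    unfolding of_real_sum by (rule sum.cong[OF refl]) (metis complex_norm_square)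
  then have "Re (B (Suc n) (Suc n)) = (1 - (\<Sum>c<Suc M. (cmod (F (lam n) 0 c))\<^sup>2)) * Re (k (lam n) (lam n))"
    using kernel_diag_pos[OF lam[of n]] unfolding B_def by (simp add: \<mu>_def del: sum.lessThan_Suc)
  ultimately show "(\<Sum>c<Suc M. (cmod (F (lam n) 0 c))\<^sup>2) \<le> 1 - Re (k 0 0) / Re (k (lam n) (lam n))"
    using kernel_diag_pos[OF lam[of n]] by (simp add: field_simps del: sum.lessThan_Suc)
qed

lemma phi_gram_step:
  fixes n M :: nat
  assumes lam: "\<And>i. i < Suc n \<Longrightarrow> lam i \<in> disc"
    and gram: "\<And>i j. i < n \<Longrightarrow> j < n \<Longrightarrow> phi (lam i * cnj (lam j)) = (\<Sum>c<M. U i c * cnj (U j c))"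
  shows "\<exists>(M' :: nat) U'. \<forall>i<Suc n. \<forall>j<Suc n.
           phi (lam i * cnj (lam j)) = (\<Sum>c<M'. U' i c * cnj (U' j c))"
proof -
  have lam_n: "\<And>i. i < n \<Longrightarrow> lam i \<in> disc" using lam by simp
  obtain F where F: "contractive_multiplier H ip (Suc M) F"
    and F_interp: "\<And>j a b. j < Suc n \<Longrightarrow> a < Suc M \<Longrightarrow> b < Suc M \<Longrightarrow>
                     F (case_nat 0 lam j) a b = gram_targets M U j a b"
  proof (rule complete_pick_pick_form[OF cp, where m = "Suc M" and n = "Suc n" and p = "case_nat 0 lam"
        and A = "gram_targets M U"])
    show "\<And>j. j < Suc n \<Longrightarrow> case_nat 0 lam j \<in> disc" using lam_n by (simp split: nat.split)
    show "\<And>v. Im (pick_form k (Suc M) (Suc n) (case_nat 0 lam) (gram_targets M U) v) = 0 \<and>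
              0 \<le> Re (pick_form k (Suc M) (Suc n) (case_nat 0 lam) (gram_targets M U) v)"
      by (rule pick_form_gram_targets_nonneg[OF lam_n gram])
  qed auto
  note row = pick_interpolant_first_row[where lam = lam and n = n and M = M and U = U and F = F,
      OF lam gram F F_interp]
  show ?thesis
  proof (rule gram_extend[where K = "\<lambda>i j. phi (lam i * cnj (lam j))" and W = "\<lambda>c. F (lam n) 0 c"
        and r = "1 - Re (k 0 0) / Re (k (lam n) (lam n))"])
    show "phi (lam n * cnj (lam i)) = cnj (phi (lam i * cnj (lam n)))" if "i < n" for i
      using phi_herm[OF lam lam, of i n] that by simp
    show "phi (lam n * cnj (lam n)) = of_real (1 - Re (k 0 0) / Re (k (lam n) (lam n)))"
      using phi_diag lam by simp
    have "(\<Sum>c<M. (cmod (F (lam n) 0 c))\<^sup>2) \<le> (\<Sum>c<Suc M. (cmod (F (lam n) 0 c))\<^sup>2)" by simp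
    then show "(\<Sum>c<M. (cmod (F (lam n) 0 c))\<^sup>2) \<le> 1 - Re (k 0 0) / Re (k (lam n) (lam n))"
      using row(2) by linarith
  qed (use gram row(1) in auto)
qed

lemma phi_gram:
  fixes n :: nat
  shows "(\<And>i. i < n \<Longrightarrow> lam i \<in> disc) \<Longrightarrow>
    \<exists>(M :: nat) U. \<forall>i<n. \<forall>j<n. phi (lam i * cnj (lam j)) = (\<Sum>c<M. U i c * cnj (U j c))"
proof (induction n)
  case 0
  then show ?case by simp
next
  case (Suc n)
  then obtain M :: nat and U
    where "\<forall>i<n. \<forall>j<n. phi (lam i * cnj (lam j)) = (\<Sum>c<M. U i c * cnj (U j c))"
    by force
  then show ?case
    using phi_gram_step[where lam = lam and n = n and M = M and U = U, OF Suc.prems] by blast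
qed

lemma positive_kernel_phi: "positive_kernel disc (\<lambda>z w. phi (z * cnj w))"
  unfolding positive_kernel_def
proof (intro allI impI)
  fix N and p :: "nat \<Rightarrow> complex"
  assume "\<forall>i<N. p i \<in> disc"
  then obtain M :: nat and U
    where "\<forall>i<N. \<forall>j<N. phi (p i * cnj (p j)) = (\<Sum>c<M. U i c * cnj (U j c))"
    using phi_gram[of N p] by auto
  then show "pos_semidef N (\<lambda>i j. phi (p i * cnj (p j)))"
    using pos_semidef_gram[where M = M and N = N and U = U]
      pos_semidef_cong[of N "\<lambda>i j. phi (p i * cnj (p j))" "\<lambda>i j. \<Sum>c<M. U i c * cnj (U j c)"]
    by simp
qed

lemma phi_coeff_nonneg: "Im (phi_coeff n) = 0 \<and> 0 \<le> Re (phi_coeff n)"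
  by (rule positive_kernel_power_series_coeff_nonneg[OF phi_sums positive_kernel_phi])

end

section \<open>Embeddings\<close>

text \<open>Take a nontrivial combination \<alpha> over the D + 2 points w_0 = 0 and w_j = 2^(-j), 1 \<le> j \<le> D + 1,
  annihilating the D + 1 coordinates of (cnj \<delta>, cnj b). At z = 0 the relation gives \<Sigma> \<alpha>_j = 0, and
  then it becomes a power series identity whose n-th coefficient is c_n times a polynomial in
  2^(-n) of degree D + 1 without constant term; D + 1 nonzero c_n force that polynomial, hence \<alpha>,
  to vanish.\<close>

lemma power_series_relation_no_large_support:
  fixes c :: "nat \<Rightarrow> complex" and f :: "complex \<Rightarrow> complex" and \<kappa> :: complex and D :: nat
  assumes sums: "\<And>t. t \<in> disc \<Longrightarrow> (\<lambda>n. c n * t ^ n) sums f t" and "c 0 = 0" "\<kappa> \<noteq> 0"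
    and \<delta>: "\<And>z. z \<in> disc \<Longrightarrow> \<delta> z \<noteq> 0"
    and rel: "\<And>z w. z \<in> disc \<Longrightarrow> w \<in> disc \<Longrightarrow>
       \<delta> z * cnj (\<delta> w) + \<kappa> * (\<Sum>i<D. b z i * cnj (b w i)) = \<kappa> + \<delta> z * cnj (\<delta> w) * f (z * cnj w)"
    and T: "finite T" "card T = Suc D" "T \<subseteq> {n. c n \<noteq> 0}"
  shows False
proof -
  have "f 0 = 0" using sums[of 0] \<open>c 0 = 0\<close> by (simp add: sums_iff)
  define w where "w j = (if j = 0 then 0 else (1/2::complex) ^ j)" for j
  have w_disc: "w j \<in> disc" for j unfolding w_def by (simp add: norm_power power_less_one_iff)
  have w_real: "cnj (w j) = w j" for j unfolding w_def by simp
  define J where "J = {0..Suc D}"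
  define V where "V j i = (if i = 0 then cnj (\<delta> (w j)) else cnj (b (w j) (i - 1)))" for j i
  obtain \<alpha> where \<alpha>_nz: "\<exists>j\<in>J. \<alpha> j \<noteq> 0" and \<alpha>V: "\<forall>i<Suc D. (\<Sum>j\<in>J. \<alpha> j * V j i) = 0"
    using homogeneous_system_nontrivial_solution[of J "Suc D" V] unfolding J_def by auto
  have \<alpha>_\<delta>: "(\<Sum>j\<in>J. \<alpha> j * cnj (\<delta> (w j))) = 0" using \<alpha>V[rule_format, of 0] unfolding V_def by simp
  have \<alpha>_b: "(\<Sum>j\<in>J. \<alpha> j * cnj (b (w j) i)) = 0" if "i < D" for i
    using \<alpha>V[rule_format, of "Suc i"] that unfolding V_def by simp
  define \<beta> where "\<beta> j = \<alpha> j * cnj (\<delta> (w j))" for j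
  have combined: "\<kappa> * (\<Sum>j\<in>J. \<alpha> j) + \<delta> z * (\<Sum>j\<in>J. \<beta> j * f (z * w j)) = 0" if z: "z \<in> disc" for z
  proof -
    have "(\<Sum>j\<in>J. \<alpha> j * (\<delta> z * cnj (\<delta> (w j)) + \<kappa> * (\<Sum>i<D. b z i * cnj (b (w j) i))))
        = \<delta> z * (\<Sum>j\<in>J. \<alpha> j * cnj (\<delta> (w j))) + \<kappa> * (\<Sum>i<D. b z i * (\<Sum>j\<in>J. \<alpha> j * cnj (b (w j) i)))"
      by (simp add: algebra_simps sum.distrib sum_distrib_left sum_distrib_right)
        (subst sum.swap, simp add: mult_ac)
    also have "\<dots> = 0" using \<alpha>_\<delta> \<alpha>_b by simp
    finally have "(\<Sum>j\<in>J. \<alpha> j * (\<kappa> + \<delta> z * cnj (\<delta> (w j)) * f (z * w j))) = 0"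
      using rel[OF z w_disc] w_real by simp
    then show ?thesis unfolding \<beta>_def by (simp add: algebra_simps sum.distrib sum_distrib_left)
  qed
  have "(\<Sum>j\<in>J. \<alpha> j) = 0" using combined[of 0] \<open>f 0 = 0\<close> \<open>\<kappa> \<noteq> 0\<close> by simp
  then have vanish: "(\<Sum>j\<in>J. \<beta> j * f (z * w j)) = 0" if "z \<in> disc" for z
    using combined[OF that] \<delta>[OF that] by simp
  have coeff: "c n * (\<Sum>j\<in>J. \<beta> j * w j ^ n) = 0" for n
    using w_disc by (intro power_series_dilations_vanishing[OF sums _ vanish]) (auto simp: less_imp_le)
  have \<beta>_0: "\<beta> j = 0" if "j \<in> {1..Suc D}" for j
  proof (rule monomial_sum_vanishing_at_points[OF _ _ _ _ that])
    show "finite ((\<lambda>n. (1/2::complex) ^ n) ` T)" using T by simp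
    show "card ((\<lambda>n. (1/2::complex) ^ n) ` T) = Suc D"
      using T card_image[OF inj_on_subset[OF half_power_inj]] by simp
    show "0 \<notin> (\<lambda>n. (1/2::complex) ^ n) ` T" by auto
    fix x assume "x \<in> (\<lambda>n. (1/2::complex) ^ n) ` T"
    then obtain n where "n \<in> T" "x = (1/2) ^ n" by blast
    then have "c n \<noteq> 0" using T by auto
    then have "n \<noteq> 0" using \<open>c 0 = 0\<close> by metis
    have "(\<Sum>j\<in>J. \<beta> j * w j ^ n) = 0" using coeff[of n] \<open>c n \<noteq> 0\<close> by simp
    moreover have "(\<Sum>j\<in>J. \<beta> j * w j ^ n) = (\<Sum>j\<in>{1..Suc D}. \<beta> j * ((1/2) ^ n) ^ j)"
      using \<open>n \<noteq> 0\<close> unfolding J_def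
      by (simp add: atLeast0_atMost_Suc_eq_insert_0 w_def power_mult[symmetric] mult.commute)
    ultimately show "(\<Sum>j\<in>{1..Suc D}. \<beta> j * x ^ j) = 0" using \<open>x = (1/2) ^ n\<close> by simp
  qed
  have \<alpha>_0: "\<alpha> j = 0" if "j \<in> {1..Suc D}" for j
    using \<beta>_0[OF that] \<delta>[OF w_disc[of j]] unfolding \<beta>_def by simp
  have "J = insert 0 {1..Suc D}" unfolding J_def by auto
  then have "\<alpha> 0 = 0" using \<open>(\<Sum>j\<in>J. \<alpha> j) = 0\<close> \<alpha>_0 by simp
  then show False using \<alpha>_nz \<alpha>_0 \<open>J = insert 0 {1..Suc D}\<close> by auto
qed

lemma power_series_relation_support_bound:
  fixes c :: "nat \<Rightarrow> complex" and f :: "complex \<Rightarrow> complex" and \<kappa> :: complex and D :: nat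
  assumes sums: "\<And>t. t \<in> disc \<Longrightarrow> (\<lambda>n. c n * t ^ n) sums f t" and "c 0 = 0" "\<kappa> \<noteq> 0"
    and \<delta>: "\<And>z. z \<in> disc \<Longrightarrow> \<delta> z \<noteq> 0"
    and rel: "\<And>z w. z \<in> disc \<Longrightarrow> w \<in> disc \<Longrightarrow>
       \<delta> z * cnj (\<delta> w) + \<kappa> * (\<Sum>i<D. b z i * cnj (b w i)) = \<kappa> + \<delta> z * cnj (\<delta> w) * f (z * cnj w)"
  shows "finite {n. c n \<noteq> 0} \<and> card {n. c n \<noteq> 0} \<le> D"
proof -
  have small: "card T \<le> D" if "finite T" "T \<subseteq> {n. c n \<noteq> 0}" for T
  proof (rule ccontr)
    assume "\<not> card T \<le> D"
    then obtain T' where "T' \<subseteq> T" "card T' = Suc D" "finite T'"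
      by (metis not_le Suc_leI obtain_subset_with_card_n)
    then show False
      using power_series_relation_no_large_support[OF assms, of T'] that by auto
  qed
  have "finite {n. c n \<noteq> 0}"
  proof (rule ccontr)
    assume "infinite {n. c n \<noteq> 0}"
    then obtain T where "finite T" "card T = Suc D" "T \<subseteq> {n. c n \<noteq> 0}"
      using infinite_arbitrarily_large by blast
    then show False using small by fastforce
  qed
  then show ?thesis using small by blast
qed

context rotation_invariant_pick_space
begin

lemma sqrt_phi_coeff_square:
  "of_real (sqrt (Re (phi_coeff n))) * cnj (of_real (sqrt (Re (phi_coeff n)))) = phi_coeff n"
  using phi_coeff_nonneg[of n] by (simp flip: of_real_mult add: complex_eq_iff)

lemma embeds_in_if_sums_phi:
  assumes vanish: "\<forall>z\<in>disc. \<forall>i. d \<le> enat i \<longrightarrow> b z i = 0"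
    and sums: "\<And>z w. z \<in> disc \<Longrightarrow> w \<in> disc \<Longrightarrow> (\<lambda>i. b z i * cnj (b w i)) sums phi (z * cnj w)"
  shows "embeds_in k d"
  unfolding embeds_in_def
proof (intro exI[of _ b] exI[of _ "\<lambda>z. of_real (sqrt (Re (k 0 0)))"] conjI ballI)
  fix z :: complex assume z: "z \<in> disc"
  show "\<forall>i. d \<le> enat i \<longrightarrow> b z i = 0" using vanish z by blast
  have "(\<lambda>i. Re (b z i * cnj (b z i))) sums Re (phi (z * cnj z))" by (rule sums_Re[OF sums[OF z z]])
  moreover have "Re (b z i * cnj (b z i)) = (cmod (b z i))\<^sup>2" for i
    using complex_norm_square[of "b z i"] by (metis Re_complex_of_real)
  ultimately have norms: "(\<lambda>i. (cmod (b z i))\<^sup>2) sums Re (phi (z * cnj z))" by simp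
  then show "summable (\<lambda>i. (cmod (b z i))\<^sup>2)" by (rule sums_summable)
  have "0 < Re (k 0 0) / Re (k z z)" using kernel_diag_pos[OF z] kernel_00_pos by simp
  then show "(\<Sum>i. (cmod (b z i))\<^sup>2) < 1"
    using sums_unique[OF norms] phi_diag[OF z] by simp
  show "complex_of_real (sqrt (Re (k 0 0))) \<noteq> 0" using kernel_00_pos by simp
next
  fix z w :: complex assume z: "z \<in> disc" and w: "w \<in> disc"
  have "of_real (sqrt (Re (k 0 0))) * cnj (of_real (sqrt (Re (k 0 0)))) = k 0 0"
    using kernel_00_pos by (subst (3) kernel_00_real) (simp flip: of_real_mult)
  moreover have "(\<Sum>i. b z i * cnj (b w i)) = 1 - k 0 0 / k z w"
    using sums_unique[OF sums[OF z w]] phi_kernel[OF z w] by simp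
  ultimately show "k z w = of_real (sqrt (Re (k 0 0))) * cnj (of_real (sqrt (Re (k 0 0)))) /
        (1 - (\<Sum>i. b z i * cnj (b w i)))"
    using kernel_nonzero[OF z w] kernel_nonzero[of 0 0] by simp
qed

lemma embeds_in_infinity: "embeds_in k \<infinity>"
proof (rule embeds_in_if_sums_phi[where b = "\<lambda>(z :: complex) i. of_real (sqrt (Re (phi_coeff i))) * z ^ i"])
  fix z w :: complex assume "z \<in> disc" "w \<in> disc"
  have "(\<lambda>i. phi_coeff i * (z * cnj w) ^ i) sums phi (z * cnj w)"
    by (rule phi_sums[OF mult_cnj_in_disc[OF \<open>z \<in> disc\<close> \<open>w \<in> disc\<close>]])
  then show "(\<lambda>i. of_real (sqrt (Re (phi_coeff i))) * z ^ i * cnj (of_real (sqrt (Re (phi_coeff i))) * w ^ i))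
      sums phi (z * cnj w)"
    using sqrt_phi_coeff_square by (simp add: power_mult_distrib mult_ac)
qed simp

lemma embeds_in_card_support:
  assumes "finite {n. phi_coeff n \<noteq> 0}"
  shows "embeds_in k (enat (card {n. phi_coeff n \<noteq> 0}))"
proof -
  define S where "S = {n. phi_coeff n \<noteq> 0}"
  define L where "L = sorted_list_of_set S"
  have "length L = card S" "distinct L" "set L = S" unfolding L_def using assms S_def by auto
  then have bij: "bij_betw ((!) L) {..<card S} S" by (intro bij_betw_nth) auto
  define b where "b z i = (if i < card S then of_real (sqrt (Re (phi_coeff (L ! i)))) * z ^ (L ! i) else 0)"
    for z :: complex and i
  have "embeds_in k (enat (card S))"
  proof (rule embeds_in_if_sums_phi[where b = b])
    show "\<forall>z\<in>disc. \<forall>i. enat (card S) \<le> enat i \<longrightarrow> b z i = 0" unfolding b_def by simp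
    fix z w :: complex assume "z \<in> disc" "w \<in> disc"
    have "b z i * cnj (b w i) = (if i \<in> {..<card S} then phi_coeff (L ! i) * (z * cnj w) ^ (L ! i) else 0)" for i
      unfolding b_def using sqrt_phi_coeff_square[of "L ! i"] by (simp add: power_mult_distrib mult_ac)
    then have "(\<lambda>i. b z i * cnj (b w i)) sums (\<Sum>i\<in>{..<card S}. phi_coeff (L ! i) * (z * cnj w) ^ (L ! i))"
      by (simp only: sums_If_finite_set finite_lessThan)
    also have "(\<Sum>i\<in>{..<card S}. phi_coeff (L ! i) * (z * cnj w) ^ (L ! i)) = (\<Sum>n\<in>S. phi_coeff n * (z * cnj w) ^ n)"
      by (rule sum.reindex_bij_betw[OF bij])
    also have "\<dots> = (\<Sum>n. phi_coeff n * (z * cnj w) ^ n)"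
      by (rule suminf_finite[symmetric]) (use assms in \<open>auto simp: S_def\<close>)
    also have "\<dots> = phi (z * cnj w)"
      using sums_unique[OF phi_sums[OF mult_cnj_in_disc[OF \<open>z \<in> disc\<close> \<open>w \<in> disc\<close>]]] ..
    finally show "(\<lambda>i. b z i * cnj (b w i)) sums phi (z * cnj w)" .
  qed
  then show ?thesis unfolding S_def .
qed

lemma embeds_in_imp_support_bound:
  assumes "embeds_in k (enat D)"
  shows "finite {n. phi_coeff n \<noteq> 0} \<and> card {n. phi_coeff n \<noteq> 0} \<le> D"
proof -
  obtain b :: "complex \<Rightarrow> nat \<Rightarrow> complex" and \<delta> :: "complex \<Rightarrow> complex" where
    b: "\<forall>z\<in>disc. \<forall>i. enat D \<le> enat i \<longrightarrow> b z i = 0"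
    and \<delta>: "\<forall>z\<in>disc. \<delta> z \<noteq> 0"
    and k: "\<forall>z\<in>disc. \<forall>w\<in>disc. k z w = \<delta> z * cnj (\<delta> w) / (1 - (\<Sum>i. b z i * cnj (b w i)))"
    using assms unfolding embeds_in_def by blast
  show ?thesis
  proof (rule power_series_relation_support_bound[OF phi_sums phi_coeff_0 kernel_nonzero[of 0 0]])
    show "\<delta> z \<noteq> 0" if "z \<in> disc" for z using \<delta> that by blast
    fix z w :: complex assume zw: "z \<in> disc" "w \<in> disc"
    define B where "B = (\<Sum>i<D. b z i * cnj (b w i))"
    have "(\<Sum>i. b z i * cnj (b w i)) = B"
      unfolding B_def by (rule suminf_finite) (use b zw in auto)
    then have kB: "k z w = \<delta> z * cnj (\<delta> w) / (1 - B)" using k zw by simp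
    then have "1 - B \<noteq> 0" using kernel_nonzero[OF zw] by auto
    then show "\<delta> z * cnj (\<delta> w) + k 0 0 * B = k 0 0 + \<delta> z * cnj (\<delta> w) * phi (z * cnj w)"
      using phi_kernel[OF zw] kB \<delta> zw by (simp add: field_simps)
  qed simp_all
qed

lemma embedding_dimension_eq:
  "embedding_dimension k =
     (if finite {n. phi_coeff n \<noteq> 0} then enat (card {n. phi_coeff n \<noteq> 0}) else \<infinity>)"
proof -
  have embeds: "embeds_in k (embedding_dimension k)"
    unfolding embedding_dimension_def by (rule LeastI[of _ \<infinity>]) (rule embeds_in_infinity)
  have least: "embeds_in k d \<Longrightarrow> embedding_dimension k \<le> d" for d
    unfolding embedding_dimension_def by (rule Least_le)
  show ?thesis
  proof (cases "embedding_dimension k")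
    case (enat D)
    then have "finite {n. phi_coeff n \<noteq> 0}" "card {n. phi_coeff n \<noteq> 0} \<le> D"
      using embeds_in_imp_support_bound embeds by auto
    moreover have "D \<le> card {n. phi_coeff n \<noteq> 0}"
      using least[OF embeds_in_card_support[OF \<open>finite {n. phi_coeff n \<noteq> 0}\<close>]] enat by simp
    ultimately show ?thesis using enat by simp
  next
    case infinity
    then show ?thesis using least[OF embeds_in_card_support] by fastforce
  qed
qed

lemma phi_coeff_eq_poly_coeff:
  assumes p: "\<forall>z\<in>disc. \<forall>w\<in>disc. 1 / k 0 0 - 1 / k z w = poly p (z * cnj w)"
  shows "phi_coeff n = k 0 0 * coeff p n"
proof -
  have phi_poly: "phi t = k 0 0 * poly p t" if t: "t \<in> disc" for t
  proof -
    obtain z w where "z \<in> disc" "w \<in> disc" "t = z * cnj w" using disc_as_mult_cnj[OF t] by blast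
    then have "poly p t = 1 / k 0 0 - (1 - phi t) / k 0 0"
      using p inverse_kernel_eq_phi by simp
    then show ?thesis using kernel_nonzero[of 0 0] by (simp add: field_simps)
  qed
  have "phi_coeff n - k 0 0 * coeff p n = 0"
  proof (rule power_series_vanishing_on_disc_imp_zero[where a = "\<lambda>n. phi_coeff n - k 0 0 * coeff p n"])
    fix t :: complex assume "cmod t < 1"
    then have "(\<lambda>n. phi_coeff n * t ^ n - k 0 0 * (coeff p n * t ^ n)) sums (phi t - k 0 0 * poly p t)"
      by (intro sums_diff sums_mult poly_sums_coeffs phi_sums) simp
    then show "(\<lambda>n. (phi_coeff n - k 0 0 * coeff p n) * t ^ n) sums 0"
      using phi_poly[of t] \<open>cmod t < 1\<close> by (simp add: algebra_simps)
  qed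
  then show ?thesis by simp
qed

lemma kernel_poly_if_finite_support:
  assumes "finite {n. phi_coeff n \<noteq> 0}"
  shows "\<exists>p. \<forall>z\<in>disc. \<forall>w\<in>disc. 1 / k 0 0 - 1 / k z w = poly p (z * cnj w)"
proof -
  define p where "p = (\<Sum>n | phi_coeff n \<noteq> 0. monom (phi_coeff n / k 0 0) n)"
  have "1 / k 0 0 - 1 / k z w = poly p (z * cnj w)" if "z \<in> disc" "w \<in> disc" for z w
  proof -
    have "phi (z * cnj w) = (\<Sum>n. phi_coeff n * (z * cnj w) ^ n)"
      using sums_unique[OF phi_sums[OF mult_cnj_in_disc[OF that]]] .
    also have "\<dots> = (\<Sum>n | phi_coeff n \<noteq> 0. phi_coeff n * (z * cnj w) ^ n)"
      by (rule suminf_finite) (use assms in auto)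
    also have "\<dots> = k 0 0 * poly p (z * cnj w)"
      using kernel_nonzero[of 0 0]
      by (simp add: p_def poly_sum poly_monom sum_distrib_left)
    finally show ?thesis
      using inverse_kernel_eq_phi[OF that] kernel_nonzero[of 0 0] by (simp add: field_simps)
  qed
  then show ?thesis by blast
qed

lemma poly_support_eq_phi_support:
  assumes "\<forall>z\<in>disc. \<forall>w\<in>disc. 1 / k 0 0 - 1 / k z w = poly p (z * cnj w)"
  shows "{n. coeff p n \<noteq> 0} = {n. phi_coeff n \<noteq> 0}"
  using phi_coeff_eq_poly_coeff[OF assms] kernel_nonzero[of 0 0] by auto

lemma kernel_poly_iff_finite_support:
  "(\<exists>p. \<forall>z\<in>disc. \<forall>w\<in>disc. 1 / k 0 0 - 1 / k z w = poly p (z * cnj w))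
     \<longleftrightarrow> finite {n. phi_coeff n \<noteq> 0}"
proof
  assume "\<exists>p. \<forall>z\<in>disc. \<forall>w\<in>disc. 1 / k 0 0 - 1 / k z w = poly p (z * cnj w)"
  then obtain p where p: "\<forall>z\<in>disc. \<forall>w\<in>disc. 1 / k 0 0 - 1 / k z w = poly p (z * cnj w)" ..
  have "finite {n. coeff p n \<noteq> 0}"
    by (rule finite_subset[of _ "{..degree p}"]) (auto intro: le_degree)
  then show "finite {n. phi_coeff n \<noteq> 0}" unfolding poly_support_eq_phi_support[OF p] .
qed (rule kernel_poly_if_finite_support)

end

theorem theorem1p8:
  fixes H :: "(complex \<Rightarrow> complex) set"
    and ip :: "(complex \<Rightarrow> complex) \<Rightarrow> (complex \<Rightarrow> complex) \<Rightarrow> complex"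
    and k :: "complex \<Rightarrow> complex \<Rightarrow> complex"
  assumes "rkhs_disc H ip k"
    and "rotation_invariant H ip"
    and "irreducible_kernel k"
    and "complete_pick H ip k"
  shows "(embedding_dimension k \<noteq> \<infinity> \<longleftrightarrow>
            (\<exists>p :: complex poly. \<forall>z\<in>disc. \<forall>w\<in>disc.
               1 / k 0 0 - 1 / k z w = poly p (z * cnj w)))
       \<and> (\<forall>p :: complex poly. (\<forall>z\<in>disc. \<forall>w\<in>disc.
               1 / k 0 0 - 1 / k z w = poly p (z * cnj w)) \<longrightarrow>
            embedding_dimension k = enat (card {n. coeff p n \<noteq> 0}))"
proof -
  interpret rotation_invariant_pick_space H ip k
    using assms by unfold_locales
  show ?thesis
  proof (intro conjI allI impI)
    show "embedding_dimension k \<noteq> \<infinity> \<longleftrightarrow>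
        (\<exists>p :: complex poly. \<forall>z\<in>disc. \<forall>w\<in>disc. 1 / k 0 0 - 1 / k z w = poly p (z * cnj w))"
      unfolding embedding_dimension_eq kernel_poly_iff_finite_support by simp
    fix p :: "complex poly"
    assume p: "\<forall>z\<in>disc. \<forall>w\<in>disc. 1 / k 0 0 - 1 / k z w = poly p (z * cnj w)"
    then have "finite {n. phi_coeff n \<noteq> 0}" using kernel_poly_iff_finite_support by blast
    then show "embedding_dimension k = enat (card {n. coeff p n \<noteq> 0})"
      unfolding embedding_dimension_eq poly_support_eq_phi_support[OF p] by simp
  qed
qed

end
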